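(* Let $m \in \mathbb N$ and $X \in M_m$. If there exists $Y \in M_m$ such that $X + Y \in \mathcal U_m$ and $X - Y \in \mathcal U_m$, then there exist $U, V \in \mathcal U_m$, $p, q, r \in \mathbb N \cup\{0\}$, $m_1,\ldots,m_r \in \mathbb N$ and $0 < s_r < \cdots < s_1 < 1$ with $p+q+\sum_{j=1}^r m_j = m$ and $$X = U\Big(I_p \oplus 0_q \oplus \bigoplus_{j=1}^r s_j I_{m_j}\Big)V.$$ Moreover, for any such $U,V,p,q,r,m_j,s_j$, if $Y \in M_m$ satisfies $X \pm Y \in \mathcal U_m$, then there exist $W \in \mathcal U_q$ and $H_j \in \mathcal H_{m_j}\cap\mathcal U_{m_j}$, $j=1,\ldots,r$, such that $$Y = U\Big(0_p \oplus W \oplus \bigoplus_{j=1}^r i\sqrt{1-s_j^2}\, H_j\Big)V.$$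
   Context: $M_m$ is the set of $m\times m$ complex matrices, $\mathcal U_m$ the unitary ones, $\mathcal H_n$ the $n\times n$ complex hermitian matrices; $\oplus$ denotes block-diagonal sum (zero-size blocks omitted). *)

theory Defs
  imports Complex_Main "Jordan_Normal_Form.Matrix"
begin

definition adjoint_mat :: "complex mat \<Rightarrow> complex mat" where
  "adjoint_mat A = mat (dim_col A) (dim_row A) (\<lambda>(i,j). cnj (A $$ (j,i)))"

definition unitary_mat :: "nat \<Rightarrow> complex mat set" where
  "unitary_mat m = {U. U \<in> carrier_mat m m \<and> adjoint_mat U * U = 1\<^sub>m m \<and> U * adjoint_mat U = 1\<^sub>m m}"

definition hermitian_mat :: "nat \<Rightarrow> complex mat set" where
  "hermitian_mat n = {H. H \<in> carrier_mat n n \<and> adjoint_mat H = H}"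

end

theory Submission
  imports Defs "Jordan_Normal_Form.Spectral_Radius" "HOL-Combinatorics.Permutations"
begin

(* With A = X + Y and B = X - Y unitary we have X = A (1 + A^H B) / 2.  The unitary matrix A^H B
   is unitarily diagonalizable (its Schur form is diagonal), say Q diag(t) Q^H, so
   X = U diag(sigma) V with sigma_k = |1 + t_k| / 2 in [0, 1]; sorting the diagonal and grouping
   equal values gives the canonical form.

   Conversely, let X = U D V be in canonical form and Z = U^H Y V^H, so that D + Z and D - Z are
   unitary.  The parallelogram and polarization identities give Z^H Z = Z Z^H = 1 - D^2 and
   D Z + Z^H D = 0.  Hence Z commutes with the diagonal matrix 1 - D^2, whose entries differ on
   different blocks, so Z is block diagonal; its block Z_s for the value s satisfies
   Z_s^H Z_s = (1 - s^2) I and s (Z_s + Z_s^H) = 0.  Thus Z_s = 0 for s = 1, Z_s is unitary for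
   s = 0, and Z_s / (i sqrt (1 - s^2)) is hermitian and unitary for 0 < s < 1. *)

section \<open>Adjoints and unitary matrices\<close>

lemma index_mult_mat_sum:
  assumes "A \<in> carrier_mat n k" "B \<in> carrier_mat k m" "i < n" "j < m"
  shows "(A * B) $$ (i,j) = (\<Sum>l<k. A $$ (i,l) * B $$ (l,j))"
  using assms by (auto simp: scalar_prod_def lessThan_atLeast0 intro!: sum.cong)

lemma sum_lessThan_single:
  fixes n :: nat
  assumes "i < n" "\<And>l. l < n \<Longrightarrow> l \<noteq> i \<Longrightarrow> f l = 0"
  shows "(\<Sum>l<n. f l) = f i"
  using assms by (subst sum.remove[of _ i]) auto

lemma sum_cnj_mult_self: "(\<Sum>l\<in>L. cnj (f l) * f l) = complex_of_real (\<Sum>l\<in>L. (cmod (f l))\<^sup>2)"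
  unfolding of_real_sum complex_norm_square by (simp add: mult.commute)

lemma sum_cnj_mult_self_eq_0_iff:
  assumes "finite L"
  shows "(\<Sum>l\<in>L. cnj (f l) * f l) = 0 \<longleftrightarrow> (\<forall>l\<in>L. f l = 0)"
  unfolding sum_cnj_mult_self of_real_eq_0_iff using assms by (simp add: sum_nonneg_eq_0_iff)

lemma adjoint_mat_carrier[simp]: "A \<in> carrier_mat n m \<Longrightarrow> adjoint_mat A \<in> carrier_mat m n"
  by (auto simp: adjoint_mat_def)

lemma adjoint_mat_dim[simp]:
  "dim_row (adjoint_mat A) = dim_col A" "dim_col (adjoint_mat A) = dim_row A"
  by (auto simp: adjoint_mat_def)

lemma adjoint_mat_index[simp]:
  "i < dim_col A \<Longrightarrow> j < dim_row A \<Longrightarrow> adjoint_mat A $$ (i,j) = cnj (A $$ (j,i))"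
  by (auto simp: adjoint_mat_def)

lemma index_adjoint_mat_mult:
  assumes "A \<in> carrier_mat n k" "B \<in> carrier_mat n m" "i < k" "j < m"
  shows "(adjoint_mat A * B) $$ (i,j) = (\<Sum>l<n. cnj (A $$ (l,i)) * B $$ (l,j))"
  using assms by (subst index_mult_mat_sum[of _ k n _ m]) auto

lemma adjoint_mat_adjoint_mat[simp]: "adjoint_mat (adjoint_mat A) = A"
  by (rule eq_matI) auto

lemma adjoint_mat_one[simp]: "adjoint_mat (1\<^sub>m n) = 1\<^sub>m n"
  by (rule eq_matI) auto

lemma adjoint_mat_smult: "adjoint_mat (c \<cdot>\<^sub>m A) = cnj c \<cdot>\<^sub>m adjoint_mat A"
  by (rule eq_matI) auto

lemma adjoint_mat_add:
  "A \<in> carrier_mat n m \<Longrightarrow> B \<in> carrier_mat n m \<Longrightarrow> adjoint_mat (A + B) = adjoint_mat A + adjoint_mat B"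
  by (rule eq_matI) auto

lemma adjoint_mat_minus:
  "A \<in> carrier_mat n m \<Longrightarrow> B \<in> carrier_mat n m \<Longrightarrow> adjoint_mat (A - B) = adjoint_mat A - adjoint_mat B"
  by (rule eq_matI) auto

lemma adjoint_mat_mult:
  assumes A: "A \<in> carrier_mat n k" and B: "B \<in> carrier_mat k m"
  shows "adjoint_mat (A * B) = adjoint_mat B * adjoint_mat A"
proof (rule eq_matI)
  fix i j assume "i < dim_row (adjoint_mat B * adjoint_mat A)" "j < dim_col (adjoint_mat B * adjoint_mat A)"
  with A B have i: "i < m" and j: "j < n" by auto
  have "adjoint_mat (A * B) $$ (i,j) = cnj ((A * B) $$ (j,i))"
    using A B i j by simp
  also have "\<dots> = (\<Sum>l<k. cnj (A $$ (j,l)) * cnj (B $$ (l,i)))"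
    unfolding index_mult_mat_sum[OF A B j i] cnj_sum by simp
  also have "\<dots> = (adjoint_mat B * adjoint_mat A) $$ (i,j)"
    using A B i j by (subst index_mult_mat_sum[of _ m k _ n]) (auto simp: mult.commute)
  finally show "adjoint_mat (A * B) $$ (i,j) = (adjoint_mat B * adjoint_mat A) $$ (i,j)" .
qed (use A B in auto)

lemma adjoint_mat_mult_self_eq_0:
  assumes A: "A \<in> carrier_mat n k" and AA: "adjoint_mat A * A = 0\<^sub>m k k"
  shows "A = 0\<^sub>m n k"
proof (rule eq_matI)
  fix i j assume "i < dim_row (0\<^sub>m n k)" "j < dim_col (0\<^sub>m n k)"
  then have i: "i < n" and j: "j < k" by auto
  have "(\<Sum>l<n. cnj (A $$ (l,j)) * A $$ (l,j)) = (adjoint_mat A * A) $$ (j,j)"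
    using index_adjoint_mat_mult[OF A A j j] ..
  then have "\<forall>l<n. A $$ (l,j) = 0"
    using AA j by (simp add: sum_cnj_mult_self_eq_0_iff)
  then show "A $$ (i,j) = 0\<^sub>m n k $$ (i,j)" using i j by simp
qed (use A in auto)

lemma smult_mat_cancel:
  assumes "(c :: 'a::field) \<noteq> 0" and "c \<cdot>\<^sub>m A = c \<cdot>\<^sub>m B"
  shows "A = B"
proof (rule eq_matI)
  show dims: "dim_row A = dim_row B" "dim_col A = dim_col B"
    using arg_cong[OF assms(2), of dim_row] arg_cong[OF assms(2), of dim_col] by auto
  fix i j assume "i < dim_row B" "j < dim_col B"
  with dims have "c * A $$ (i,j) = c * B $$ (i,j)"
    using arg_cong[OF assms(2), of "\<lambda>M. M $$ (i,j)"] by simp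
  with assms(1) show "A $$ (i,j) = B $$ (i,j)" by simp
qed

lemma unitary_matI:
  assumes "U \<in> carrier_mat n n" "adjoint_mat U * U = 1\<^sub>m n"
  shows "U \<in> unitary_mat n"
  using assms mat_mult_left_right_inverse[of "adjoint_mat U" n U]
  unfolding unitary_mat_def by auto

lemma unitary_matD:
  assumes "U \<in> unitary_mat n"
  shows "U \<in> carrier_mat n n" "adjoint_mat U * U = 1\<^sub>m n" "U * adjoint_mat U = 1\<^sub>m n"
  using assms unfolding unitary_mat_def by auto

lemma one_unitary_mat: "1\<^sub>m n \<in> unitary_mat n"
  unfolding unitary_mat_def by auto

lemma unitary_mat_adjoint: "U \<in> unitary_mat n \<Longrightarrow> adjoint_mat U \<in> unitary_mat n"
  unfolding unitary_mat_def by auto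

lemma unitary_mat_cancel_left:
  assumes U: "U \<in> unitary_mat n" and M: "M \<in> carrier_mat n k"
  shows "adjoint_mat U * (U * M) = M" "U * (adjoint_mat U * M) = M"
  using unitary_matD[OF U] M by (simp_all add: assoc_mult_mat[symmetric, of _ n n _ n _ k])

lemma unitary_mat_cancel_right:
  assumes U: "U \<in> unitary_mat n" and M: "M \<in> carrier_mat k n"
  shows "M * adjoint_mat U * U = M" "M * U * adjoint_mat U = M"
  using unitary_matD[OF U] M by (simp_all add: assoc_mult_mat[of _ k n _ n _ n])

lemma unitary_mat_mult:
  assumes U: "U \<in> unitary_mat n" and V: "V \<in> unitary_mat n"
  shows "U * V \<in> unitary_mat n"
proof (rule unitary_matI)
  note u = unitary_matD[OF U] and v = unitary_matD[OF V]
  show "U * V \<in> carrier_mat n n" using u v by auto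
  have "adjoint_mat (U * V) * (U * V) = adjoint_mat V * (adjoint_mat U * (U * V))"
    using u v by (simp add: adjoint_mat_mult[of _ n n _ n] assoc_mult_mat[of _ n n _ n _ n])
  then show "adjoint_mat (U * V) * (U * V) = 1\<^sub>m n"
    using u v unitary_mat_cancel_left[OF U, of V n] by simp
qed

lemma unitary_mat_cancel_sides:
  assumes U: "U \<in> unitary_mat n" and V: "V \<in> unitary_mat n" and M: "M \<in> carrier_mat n n"
    and UMV: "U * M * V \<in> unitary_mat n"
  shows "M \<in> unitary_mat n"
proof -
  note u = unitary_matD[OF U] and v = unitary_matD[OF V]
  have "adjoint_mat U * (U * M * V) * adjoint_mat V = adjoint_mat U * (U * (M * V * adjoint_mat V))"
    using u v M by (simp add: assoc_mult_mat[of _ n n _ n _ n])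
  also have "\<dots> = M"
    using u v M unitary_mat_cancel_left[OF U, of M n] unitary_mat_cancel_right[OF V, of M n] by simp
  finally show ?thesis
    using unitary_mat_mult[OF unitary_mat_mult[OF unitary_mat_adjoint[OF U] UMV] unitary_mat_adjoint[OF V]]
    by simp
qed

lemma unitary_mat_sandwich:
  assumes U: "U \<in> unitary_mat n" and V: "V \<in> unitary_mat n" and M: "M \<in> carrier_mat n n"
  shows "U * (adjoint_mat U * M * adjoint_mat V) * V = M"
  using unitary_matD[OF U] unitary_matD[OF V] M unitary_mat_cancel_left(2)[OF U M]
    unitary_mat_cancel_right(1)[OF V M]
  by (simp add: mult_carrier_mat[of _ n n] assoc_mult_mat[of _ n n _ n _ n])

lemma dim_mat_diag[simp]: "dim_row (mat_diag n f) = n" "dim_col (mat_diag n f) = n"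
  and index_mat_diag[simp]: "i < n \<Longrightarrow> j < n \<Longrightarrow> mat_diag n f $$ (i,j) = (if i = j then f i else 0)"
  by (auto simp: mat_diag_def)

lemma mat_diag_cong: "(\<And>i. i < n \<Longrightarrow> f i = g i) \<Longrightarrow> mat_diag n f = mat_diag n g"
  by (rule eq_matI) auto

lemma adjoint_mat_diag: "adjoint_mat (mat_diag n f) = mat_diag n (\<lambda>k. cnj (f k))"
  by (rule eq_matI) auto

lemma mat_diag_unitary:
  assumes "\<And>k. k < n \<Longrightarrow> cmod (f k) = 1"
  shows "mat_diag n f \<in> unitary_mat n"
proof (rule unitary_matI)
  have "cnj (f k) * f k = 1" if "k < n" for k
    using complex_norm_square[of "f k"] assms[OF that] by (simp add: mult.commute)
  then show "adjoint_mat (mat_diag n f) * mat_diag n f = 1\<^sub>m n"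
    by (auto simp: adjoint_mat_diag intro!: eq_matI)
qed simp

lemma commute_mat_diag_eq_0:
  assumes Z: "Z \<in> carrier_mat n n" and comm: "Z * mat_diag n g = mat_diag n g * Z"
    and ij: "i < n" "j < n" "g i \<noteq> g j"
  shows "Z $$ (i,j) = (0 :: 'a :: idom)"
proof -
  have "Z $$ (i,j) * g j = g i * Z $$ (i,j)"
    using arg_cong[OF comm, of "\<lambda>M. M $$ (i,j)"] Z ij
    by (simp add: mat_diag_mult_left[OF Z] mat_diag_mult_right[OF Z])
  with ij show ?thesis by (simp add: mult.commute)
qed

lemma add_eq_one_mat_diag:
  fixes f :: "nat \<Rightarrow> 'a::comm_ring_1"
  assumes M: "M \<in> carrier_mat n n" and eq: "mat_diag n f + M = 1\<^sub>m n"
  shows "M = mat_diag n (\<lambda>i. 1 - f i)"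
proof (rule eq_matI)
  fix i j assume "i < dim_row (mat_diag n (\<lambda>i. 1 - f i))" "j < dim_col (mat_diag n (\<lambda>i. 1 - f i))"
  with M arg_cong[OF eq, of "\<lambda>A. A $$ (i,j)"] show "M $$ (i,j) = mat_diag n (\<lambda>i. 1 - f i) $$ (i,j)"
    by (auto simp: eq_diff_eq add.commute)
qed (use M in auto)

lemma smult_one_mat_mult:
  "A \<in> carrier_mat n m \<Longrightarrow> (c \<cdot>\<^sub>m 1\<^sub>m n) * A = (c :: 'a::comm_ring_1) \<cdot>\<^sub>m A"
  by (simp add: mult_smult_assoc_mat[of _ n n _ m])

lemma mult_smult_one_mat:
  "A \<in> carrier_mat m n \<Longrightarrow> A * (c \<cdot>\<^sub>m 1\<^sub>m n) = (c :: 'a::comm_ring_1) \<cdot>\<^sub>m A"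
  by (simp add: mult_smult_distrib[of _ m n _ n])

section \<open>Unitary triangularization\<close>

lemma unitary_mat_of_corthogonal:
  assumes ws: "set ws \<subseteq> carrier_vec n" and orth: "corthogonal ws" and len: "length ws = n"
  defines "nr \<equiv> \<lambda>w. sqrt (\<Sum>l<n. (cmod (w $ l))\<^sup>2)"
  shows "mat_of_cols n (map (\<lambda>w. (1 / complex_of_real (nr w)) \<cdot>\<^sub>v w) ws) \<in> unitary_mat n"
    (is "?W \<in> _")
proof (rule unitary_matI)
  show W: "?W \<in> carrier_mat n n" using len by (metis length_map mat_of_cols_carrier(1))
  have wsi: "ws ! i \<in> carrier_vec n" if "i < n" for i using ws len that by auto
  have cscalar: "ws ! j \<bullet>c ws ! i = (\<Sum>l<n. ws ! j $ l * cnj (ws ! i $ l))" if "i < n" "j < n" for i j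
    using wsi[OF that(1)] wsi[OF that(2)] by (auto simp: scalar_prod_def lessThan_atLeast0 intro!: sum.cong)
  have norm_sq: "ws ! i \<bullet>c ws ! i = complex_of_real ((nr (ws ! i))\<^sup>2)" if "i < n" for i
  proof -
    have "ws ! i \<bullet>c ws ! i = (\<Sum>l<n. cnj (ws ! i $ l) * ws ! i $ l)"
      unfolding cscalar[OF that that] by (simp add: mult.commute)
    also have "\<dots> = complex_of_real ((nr (ws ! i))\<^sup>2)"
      unfolding sum_cnj_mult_self nr_def by (subst real_sqrt_pow2) (auto intro: sum_nonneg)
    finally show ?thesis .
  qed
  have nr_pos: "nr (ws ! i) \<noteq> 0" if "i < n" for i
    using corthogonalD[OF orth, of i i] norm_sq[OF that] that len by auto
  show "adjoint_mat ?W * ?W = 1\<^sub>m n"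
  proof (rule eq_matI)
    fix i j assume "i < dim_row (1\<^sub>m n)" "j < dim_col (1\<^sub>m n)"
    then have i: "i < n" and j: "j < n" by auto
    have "(adjoint_mat ?W * ?W) $$ (i,j) = (\<Sum>l<n. cnj (?W $$ (l,i)) * ?W $$ (l,j))"
      using W i j by (subst index_mult_mat_sum[of _ n n _ n]) auto
    also have "\<dots> = (ws ! j \<bullet>c ws ! i) / (complex_of_real (nr (ws ! i)) * complex_of_real (nr (ws ! j)))"
      using i j len wsi[OF i] wsi[OF j]
      by (simp add: cscalar mat_of_cols_def sum_divide_distrib mult.commute)
    also have "\<dots> = 1\<^sub>m n $$ (i,j)"
      using corthogonalD[OF orth, of j i] i j len norm_sq[OF i] nr_pos[OF i]
      by (cases "i = j") (auto simp: power2_eq_square)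
    finally show "(adjoint_mat ?W * ?W) $$ (i,j) = 1\<^sub>m n $$ (i,j)" .
  qed (use W in auto)
qed

lemma unitary_mat_first_col:
  assumes v: "v \<in> carrier_vec n" and v0: "v \<noteq> 0\<^sub>v n"
  shows "\<exists>W c. W \<in> unitary_mat n \<and> col W 0 = c \<cdot>\<^sub>v v"
proof -
  interpret cof_vec_space n "TYPE(complex)" .
  define b where "b = basis_completion v"
  from basis_completion[OF v v0, folded b_def]
  have dist_b: "distinct b" and indep: "\<not> lin_dep (set b)" and b: "set b \<subseteq> carrier_vec n"
    and hdb: "hd b = v" and len_b: "length b = n" by auto
  have n: "n \<noteq> 0"
    using v v0 by (auto intro!: eq_vecI)
  from hdb len_b n obtain vs where bv: "b = v # vs" by (cases b) auto
  define ws where "ws = gram_schmidt n b"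
  from gram_schmidt_result[OF b dist_b indep ws_def]
  have ws: "set ws \<subseteq> carrier_vec n" "corthogonal ws" "length ws = n" by (auto simp: len_b)
  have ws0: "ws ! 0 = v"
    using gram_schmidt_hd[OF v, of vs] ws(3) n unfolding ws_def bv by (metis hd_conv_nth list.size(3))
  define nr where "nr \<equiv> \<lambda>w::complex vec. sqrt (\<Sum>l<n. (cmod (w $ l))\<^sup>2)"
  let ?W = "mat_of_cols n (map (\<lambda>w. (1 / complex_of_real (nr w)) \<cdot>\<^sub>v w) ws)"
  have "?W \<in> unitary_mat n"
    using unitary_mat_of_corthogonal[OF ws] unfolding nr_def .
  moreover have "col ?W 0 = (1 / complex_of_real (nr v)) \<cdot>\<^sub>v v"
    using ws n v ws0 by (subst col_mat_of_cols) auto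
  ultimately show ?thesis by blast
qed

lemma unitary_deflation:
  assumes A: "A \<in> carrier_mat n n" and ev: "eigenvector A v e"
  shows "\<exists>W. W \<in> unitary_mat n \<and> (\<forall>i<n. (adjoint_mat W * A * W) $$ (i,0) = (if i = 0 then e else 0))"
proof -
  from ev A have v: "v \<in> carrier_vec n" and v0: "v \<noteq> 0\<^sub>v n" and Av: "A *\<^sub>v v = e \<cdot>\<^sub>v v"
    unfolding eigenvector_def by auto
  from unitary_mat_first_col[OF v v0] obtain W c where W: "W \<in> unitary_mat n" and Wc: "col W 0 = c \<cdot>\<^sub>v v"
    by auto
  note w = unitary_matD[OF W]
  have AW0: "(A * W) $$ (l,0) = e * W $$ (l,0)" if l: "l < n" for l
  proof -
    have "(A * W) $$ (l,0) = (A *\<^sub>v col W 0) $ l" using A w l v0 by (cases "n = 0") auto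
    also have "A *\<^sub>v col W 0 = e \<cdot>\<^sub>v col W 0"
      unfolding Wc using mult_mat_vec[OF A v] Av by (simp add: smult_smult_assoc mult.commute)
    finally show ?thesis using w l by simp
  qed
  have "(adjoint_mat W * A * W) $$ (i,0) = (if i = 0 then e else 0)" if i: "i < n" for i
  proof -
    have "(adjoint_mat W * A * W) $$ (i,0) = (adjoint_mat W * (A * W)) $$ (i,0)"
      using A w by (simp add: assoc_mult_mat[of _ n n _ n _ n])
    also have "\<dots> = (\<Sum>l<n. cnj (W $$ (l,i)) * (A * W) $$ (l,0))"
      using A w i by (subst index_mult_mat_sum[of _ n n _ n]) auto
    also have "\<dots> = e * (\<Sum>l<n. cnj (W $$ (l,i)) * W $$ (l,0))"
      by (simp add: sum_distrib_left AW0 mult.left_commute)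
    also have "(\<Sum>l<n. cnj (W $$ (l,i)) * W $$ (l,0)) = (adjoint_mat W * W) $$ (i,0)"
      using w i by (subst index_mult_mat_sum[of _ n n _ n]) auto
    finally show ?thesis using w i by simp
  qed
  with W show ?thesis by blast
qed

lemma unitary_mat_one_block:
  assumes Q: "Q \<in> unitary_mat k"
  defines "Q' \<equiv> four_block_mat (1\<^sub>m 1) (0\<^sub>m 1 k) (0\<^sub>m k 1) Q"
  shows "Q' \<in> unitary_mat (Suc k)"
    and "adjoint_mat Q' = four_block_mat (1\<^sub>m 1) (0\<^sub>m 1 k) (0\<^sub>m k 1) (adjoint_mat Q)"
proof -
  note q = unitary_matD[OF Q]
  show adj: "adjoint_mat Q' = four_block_mat (1\<^sub>m 1) (0\<^sub>m 1 k) (0\<^sub>m k 1) (adjoint_mat Q)"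
    unfolding Q'_def using q by (intro eq_matI) auto
  have "adjoint_mat Q' * Q' = four_block_mat (1\<^sub>m 1) (0\<^sub>m 1 k) (0\<^sub>m k 1) (1\<^sub>m k)"
    unfolding adj unfolding Q'_def using q
    by (subst mult_four_block_mat[where ?nr1.0=1 and ?n1.0=1 and ?n2.0=k and ?nr2.0=k and ?nc1.0=1 and ?nc2.0=k]) auto
  then show "Q' \<in> unitary_mat (Suc k)"
    by (intro unitary_matI) (use q in \<open>auto simp: Q'_def\<close>)
qed

lemma unitary_schur_extend:
  assumes A1: "A1 \<in> carrier_mat 1 1" and A2: "A2 \<in> carrier_mat 1 k"
    and Q: "Q \<in> unitary_mat k" and T: "T \<in> carrier_mat k k" "upper_triangular T"
  shows "\<exists>Q' T'. Q' \<in> unitary_mat (Suc k) \<and> T' \<in> carrier_mat (Suc k) (Suc k) \<and> upper_triangular T' \<and>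
    four_block_mat A1 A2 (0\<^sub>m k 1) (Q * T * adjoint_mat Q) = Q' * T' * adjoint_mat Q'"
proof -
  note q = unitary_matD[OF Q]
  define Q' where "Q' = four_block_mat (1\<^sub>m 1) (0\<^sub>m 1 k) (0\<^sub>m k 1) Q"
  define T' where "T' = four_block_mat A1 (A2 * Q) (0\<^sub>m k 1) T"
  have Q': "Q' \<in> unitary_mat (Suc k)"
    and adjQ': "adjoint_mat Q' = four_block_mat (1\<^sub>m 1) (0\<^sub>m 1 k) (0\<^sub>m k 1) (adjoint_mat Q)"
    unfolding Q'_def using unitary_mat_one_block[OF Q] by auto
  have "T' \<in> carrier_mat (Suc k) (Suc k)" unfolding T'_def using A1 A2 T by auto
  moreover have "upper_triangular T'" unfolding T'_def
    by (rule upper_triangular_four_block[OF _ T(1) _ T(2)]) (use A1 in auto)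
  moreover have "Q' * T' * adjoint_mat Q' = four_block_mat A1 A2 (0\<^sub>m k 1) (Q * T * adjoint_mat Q)"
    unfolding adjQ' unfolding Q'_def T'_def using q A1 A2 T mult_carrier_mat[OF mult_carrier_mat[OF q(1) T(1)] adjoint_mat_carrier[OF q(1)]]
    by (simp add: mult_four_block_mat[where ?nr1.0=1 and ?n1.0=1 and ?n2.0=k and ?nr2.0=k and ?nc1.0=1 and ?nc2.0=k]
        unitary_mat_cancel_right(2)[OF Q A2])
  ultimately show ?thesis using Q' by metis
qed

lemma unitary_schur_decomposition:
  assumes "A \<in> carrier_mat n n"
  shows "\<exists>Q T. Q \<in> unitary_mat n \<and> T \<in> carrier_mat n n \<and> upper_triangular T \<and> A = Q * T * adjoint_mat Q"
  using assms
proof (induction n arbitrary: A)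
  case 0
  then show ?case
    by (intro exI[of _ "1\<^sub>m 0"] exI[of _ A]) (auto simp: one_unitary_mat upper_triangular_def)
next
  case (Suc k A)
  have A: "A \<in> carrier_mat (Suc k) (Suc k)" by fact
  obtain e v where "eigenvector A v e"
    using spectrum_non_empty[OF A] unfolding spectrum_def eigenvalue_def by auto
  from unitary_deflation[OF A this] obtain W where W: "W \<in> unitary_mat (Suc k)"
    and col0: "\<forall>i<Suc k. (adjoint_mat W * A * W) $$ (i,0) = (if i = 0 then e else 0)" by auto
  note w = unitary_matD[OF W]
  define A' where "A' = adjoint_mat W * A * W"
  have A': "A' \<in> carrier_mat (Suc k) (Suc k)" unfolding A'_def using A w by auto
  obtain A1 A2 A0 A3 where sp: "split_block A' 1 1 = (A1, A2, A0, A3)"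
    by (cases "split_block A' 1 1") auto
  have dims: "dim_row A' = 1 + k" "dim_col A' = 1 + k" using A' by auto
  note spl = split_block[OF sp dims]
  have A0: "A0 = 0\<^sub>m k 1"
    using sp col0 A' unfolding split_block_def Let_def A'_def[symmetric] by (auto intro!: eq_matI)
  from Suc.IH[OF spl(4)] obtain Q3 T3 where Q3: "Q3 \<in> unitary_mat k" and T3: "T3 \<in> carrier_mat k k"
    and ut3: "upper_triangular T3" and A3: "A3 = Q3 * T3 * adjoint_mat Q3"
    by auto
  from unitary_schur_extend[OF spl(1,2) Q3 T3 ut3] obtain Q T where Q: "Q \<in> unitary_mat (Suc k)"
    and T: "T \<in> carrier_mat (Suc k) (Suc k)" "upper_triangular T"
    and QT: "A' = Q * T * adjoint_mat Q"
    using spl(5) A0 A3 by auto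
  note q = unitary_matD[OF Q]
  have "W * A' * adjoint_mat W = A"
    unfolding A'_def
    using w A unitary_mat_cancel_left(2)[OF W, of "A * W" "Suc k"] unitary_mat_cancel_right(2)[OF W A]
    by (simp add: assoc_mult_mat[of _ "Suc k" "Suc k" _ "Suc k" _ "Suc k"])
  then have "A = (W * Q) * T * adjoint_mat (W * Q)"
    unfolding QT using w q T
    by (simp add: adjoint_mat_mult[of _ "Suc k" "Suc k" _ "Suc k"] mult_carrier_mat[of _ "Suc k" "Suc k"]
        assoc_mult_mat[of _ "Suc k" "Suc k" _ "Suc k" _ "Suc k"])
  then show ?case using unitary_mat_mult[OF W Q] T by blast
qed

lemma unitary_upper_triangular_diagonal:
  assumes U: "T \<in> unitary_mat n" and ut: "upper_triangular T"
  shows "i < n \<Longrightarrow> j < n \<Longrightarrow> i \<noteq> j \<Longrightarrow> T $$ (i,j) = 0" and "i < n \<Longrightarrow> cmod (T $$ (i,i)) = 1"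
proof -
  note u = unitary_matD[OF U]
  \<comment> \<open>Once the rows above row i are diagonal, column i has only its diagonal entry, so that
    entry has modulus 1, and since row i has norm 1 as well its other entries vanish.\<close>
  have "i < n \<longrightarrow> (\<forall>j<n. j \<noteq> i \<longrightarrow> T $$ (i,j) = 0) \<and> cmod (T $$ (i,i)) = 1" for i
  proof (induction i rule: less_induct)
    case (less i)
    show ?case
    proof
      assume i: "i < n"
      have col: "T $$ (l,i) = 0" if "l < n" "l \<noteq> i" for l
      proof (cases "l < i")
        case True
        then show ?thesis using less.IH[of l] that i by auto
      next
        case False
        then show ?thesis using ut u that by (auto simp: upper_triangular_def)
      qed
      have "1 = (adjoint_mat T * T) $$ (i,i)" using u i by simp
      also have "\<dots> = (\<Sum>l<n. cnj (T $$ (l,i)) * T $$ (l,i))"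
        using u i by (subst index_mult_mat_sum[of _ n n _ n]) auto
      also have "\<dots> = cnj (T $$ (i,i)) * T $$ (i,i)"
        using i col by (intro sum_lessThan_single) auto
      finally have diag: "(cmod (T $$ (i,i)))\<^sup>2 = 1"
        by (metis complex_norm_square mult.commute of_real_eq_1_iff)
      have "1 = (T * adjoint_mat T) $$ (i,i)" using u i by simp
      also have "\<dots> = (\<Sum>l<n. cnj (T $$ (i,l)) * T $$ (i,l))"
        using u i by (subst index_mult_mat_sum[of _ n n _ n]) (auto simp: mult.commute)
      finally have "(\<Sum>l<n. (cmod (T $$ (i,l)))\<^sup>2) = 1"
        unfolding sum_cnj_mult_self by (metis of_real_eq_1_iff)
      with diag i have "(\<Sum>l\<in>{..<n}-{i}. (cmod (T $$ (i,l)))\<^sup>2) = 0"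
        by (simp add: sum.remove[of _ i])
      then have "\<forall>j<n. j \<noteq> i \<longrightarrow> T $$ (i,j) = 0"
        by (simp add: sum_nonneg_eq_0_iff)
      moreover have "cmod (T $$ (i,i)) = 1"
        using diag norm_ge_zero[of "T $$ (i,i)"] by (auto simp: power2_eq_1_iff)
      ultimately show "(\<forall>j<n. j \<noteq> i \<longrightarrow> T $$ (i,j) = 0) \<and> cmod (T $$ (i,i)) = 1" by blast
    qed
  qed
  then show "i < n \<Longrightarrow> j < n \<Longrightarrow> i \<noteq> j \<Longrightarrow> T $$ (i,j) = 0" and "i < n \<Longrightarrow> cmod (T $$ (i,i)) = 1"
    by auto
qed

lemma unitary_mat_diagonalization:
  assumes C: "C \<in> unitary_mat n"
  shows "\<exists>Q t. Q \<in> unitary_mat n \<and> (\<forall>k<n. cmod (t k) = 1) \<and> C = Q * mat_diag n t * adjoint_mat Q"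
proof -
  obtain Q T where Q: "Q \<in> unitary_mat n" and T: "T \<in> carrier_mat n n" and ut: "upper_triangular T"
    and CQ: "C = Q * T * adjoint_mat Q"
    using unitary_schur_decomposition[OF unitary_matD(1)[OF C]] by blast
  note q = unitary_matD[OF Q]
  have "adjoint_mat Q * C * Q = adjoint_mat Q * (Q * (T * (adjoint_mat Q * Q)))"
    unfolding CQ using q T by (simp add: mult_carrier_mat[of _ n n] assoc_mult_mat[of _ n n _ n _ n])
  also have "\<dots> = T" using q T unitary_mat_cancel_left(1)[OF Q T] by simp
  finally have "T \<in> unitary_mat n"
    using unitary_mat_mult[OF unitary_mat_mult[OF unitary_mat_adjoint[OF Q] C] Q] by simp
  note diagonal = unitary_upper_triangular_diagonal[OF this ut]
  have "T = mat_diag n (\<lambda>k. T $$ (k,k))"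
    using T diagonal(1) by (intro eq_matI) auto
  with Q CQ diagonal(2) show ?thesis by metis
qed

section \<open>Block-diagonal matrices\<close>

fun block_index :: "nat list \<Rightarrow> nat \<Rightarrow> nat" where
  "block_index [] i = 0"
| "block_index (n # ns) i = (if i < n then 0 else Suc (block_index ns (i - n)))"

definition block_offset :: "nat list \<Rightarrow> nat \<Rightarrow> nat" where
  "block_offset ns b = sum_list (take b ns)"

lemma block_offset_0[simp]: "block_offset ns 0 = 0"
  and block_offset_Cons_Suc[simp]: "block_offset (n # ns) (Suc b) = n + block_offset ns b"
  by (auto simp: block_offset_def)

lemma block_index_less: "i < sum_list ns \<Longrightarrow> block_index ns i < length ns"
  by (induction ns arbitrary: i) auto

lemma block_index_bounds:
  "i < sum_list ns \<Longrightarrow> block_offset ns (block_index ns i) \<le> i \<and> i < block_offset ns (block_index ns i) + ns ! block_index ns i"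
proof (induction ns arbitrary: i)
  case (Cons n ns)
  show ?case
  proof (cases "i < n")
    case False
    with Cons.prems have "i - n < sum_list ns" by simp
    from Cons.IH[OF this] False show ?thesis by auto
  qed simp
qed simp

lemma block_index_offset: "b < length ns \<Longrightarrow> t < ns ! b \<Longrightarrow> block_index ns (block_offset ns b + t) = b"
proof (induction ns arbitrary: b)
  case (Cons n ns)
  then show ?case by (cases b) auto
qed auto

lemma block_offset_bound: "b < length ns \<Longrightarrow> block_offset ns b + ns ! b \<le> sum_list ns"
proof (induction ns arbitrary: b)
  case (Cons n ns)
  then show ?case by (cases b) auto
qed auto

lemma block_index_eq_iff:
  assumes "i < sum_list ns" "b < length ns"
  shows "block_index ns i = b \<longleftrightarrow> block_offset ns b \<le> i \<and> i < block_offset ns b + ns ! b"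
  using block_index_bounds[OF assms(1)] block_index_offset[OF assms(2), of "i - block_offset ns b"]
  by auto

lemma diag_block_mat_index:
  assumes sq: "\<forall>A\<in>set As. dim_col A = dim_row A"
    and i: "i < sum_list (map dim_row As)" and j: "j < sum_list (map dim_row As)"
  shows "diag_block_mat As $$ (i,j) =
    (let ns = map dim_row As; b = block_index ns i in
      if b = block_index ns j then As ! b $$ (i - block_offset ns b, j - block_offset ns b) else 0)"
  using sq i j
proof (induction As arbitrary: i j)
  case (Cons A As)
  let ?ns = "map dim_row As"
  have sqA: "dim_col A = dim_row A" and sqs: "\<forall>A\<in>set As. dim_col A = dim_row A" using Cons.prems by auto
  have dims: "dim_row (diag_block_mat As) = sum_list ?ns" "dim_col (diag_block_mat As) = sum_list ?ns"
    using dim_diag_block_mat[of As] sqs by (auto intro!: arg_cong[of _ _ sum_list])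
  show ?case
  proof (cases "i < dim_row A \<or> j < dim_row A")
    case True
    then show ?thesis using Cons.prems dims sqA by (auto simp: Let_def)
  next
    case False
    then have "i - dim_row A < sum_list ?ns" "j - dim_row A < sum_list ?ns" using Cons.prems by auto
    from Cons.IH[OF sqs this] False show ?thesis
      using Cons.prems dims sqA by (auto simp: Let_def diff_diff_add)
  qed
qed simp

lemma diag_block_mat_scalars:
  fixes c :: "nat \<Rightarrow> 'a::semiring_1"
  shows "diag_block_mat (map (\<lambda>b. c b \<cdot>\<^sub>m 1\<^sub>m (ns ! b)) [0..<length ns])
    = mat_diag (sum_list ns) (\<lambda>i. c (block_index ns i))"
    (is "diag_block_mat ?L = _")
proof -
  have dims: "map dim_row ?L = ns" "map dim_col ?L = ns" by (auto intro: nth_equalityI)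
  show ?thesis
  proof (rule eq_matI)
    fix i j assume "i < dim_row (mat_diag (sum_list ns) (\<lambda>i. c (block_index ns i)))"
      "j < dim_col (mat_diag (sum_list ns) (\<lambda>i. c (block_index ns i)))"
    then have i: "i < sum_list ns" and j: "j < sum_list ns" by auto
    note bi = block_index_bounds[OF i] and bj = block_index_bounds[OF j]
    show "diag_block_mat ?L $$ (i,j) = mat_diag (sum_list ns) (\<lambda>i. c (block_index ns i)) $$ (i,j)"
      using diag_block_mat_index[of ?L i j] dims i j bi bj block_index_less[OF i]
      by (cases "block_index ns i = block_index ns j") (auto simp: Let_def)
  qed (simp_all only: dim_diag_block_mat dims dim_mat_diag)
qed

definition diag_block :: "nat list \<Rightarrow> 'a mat \<Rightarrow> nat \<Rightarrow> 'a mat" where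
  "diag_block ns M b = mat (ns ! b) (ns ! b) (\<lambda>(i,j). M $$ (block_offset ns b + i, block_offset ns b + j))"

definition block_diagonal :: "nat list \<Rightarrow> 'a::zero mat \<Rightarrow> bool" where
  "block_diagonal ns M \<longleftrightarrow>
    (\<forall>i<sum_list ns. \<forall>j<sum_list ns. block_index ns i \<noteq> block_index ns j \<longrightarrow> M $$ (i,j) = 0)"

lemma diag_block_carrier[simp]: "diag_block ns M b \<in> carrier_mat (ns ! b) (ns ! b)"
  and dim_diag_block[simp]: "dim_row (diag_block ns M b) = ns ! b" "dim_col (diag_block ns M b) = ns ! b"
  and index_diag_block[simp]: "k < ns ! b \<Longrightarrow> l < ns ! b \<Longrightarrow>
    diag_block ns M b $$ (k,l) = M $$ (block_offset ns b + k, block_offset ns b + l)"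
  by (auto simp: diag_block_def)

lemma diag_block_add:
  assumes "M \<in> carrier_mat (sum_list ns) (sum_list ns)" "N \<in> carrier_mat (sum_list ns) (sum_list ns)"
    and "b < length ns"
  shows "diag_block ns (M + N) b = diag_block ns M b + diag_block ns N b"
  using assms block_offset_bound[OF assms(3)] by (intro eq_matI) auto

lemma diag_block_minus:
  assumes "M \<in> carrier_mat (sum_list ns) (sum_list ns)" "N \<in> carrier_mat (sum_list ns) (sum_list ns)"
    and "b < length ns"
  shows "diag_block ns (M - N) b = diag_block ns M b - diag_block ns N b"
  using assms block_offset_bound[OF assms(3)] by (intro eq_matI) auto

lemma diag_block_adjoint:
  assumes "M \<in> carrier_mat (sum_list ns) (sum_list ns)" and "b < length ns"
  shows "diag_block ns (adjoint_mat M) b = adjoint_mat (diag_block ns M b)"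
  using assms block_offset_bound[OF assms(2)] by (intro eq_matI) auto

lemma diag_block_one: "b < length ns \<Longrightarrow> diag_block ns (1\<^sub>m (sum_list ns)) b = 1\<^sub>m (ns ! b)"
  using block_offset_bound[of b ns] by (intro eq_matI) auto

lemma diag_block_mat_diag:
  fixes c :: "nat \<Rightarrow> 'a::semiring_1"
  assumes "b < length ns"
  shows "diag_block ns (mat_diag (sum_list ns) (\<lambda>i. c (block_index ns i))) b = c b \<cdot>\<^sub>m 1\<^sub>m (ns ! b)"
  using assms block_offset_bound[OF assms] block_index_offset[OF assms] by (intro eq_matI) auto

lemma block_diagonal_mat_diag: "block_diagonal ns (mat_diag (sum_list ns) (\<lambda>i. c (block_index ns i)))"
  unfolding block_diagonal_def by auto

lemma block_diagonal_add:
  fixes M N :: "'a::group_add mat"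
  shows "M \<in> carrier_mat (sum_list ns) (sum_list ns) \<Longrightarrow> N \<in> carrier_mat (sum_list ns) (sum_list ns) \<Longrightarrow>
    block_diagonal ns M \<Longrightarrow> block_diagonal ns N \<Longrightarrow> block_diagonal ns (M + N)"
  unfolding block_diagonal_def by auto

lemma block_diagonal_minus:
  fixes M N :: "'a::group_add mat"
  shows "M \<in> carrier_mat (sum_list ns) (sum_list ns) \<Longrightarrow> N \<in> carrier_mat (sum_list ns) (sum_list ns) \<Longrightarrow>
    block_diagonal ns M \<Longrightarrow> block_diagonal ns N \<Longrightarrow> block_diagonal ns (M - N)"
  unfolding block_diagonal_def by auto

lemma block_diagonal_adjoint:
  "M \<in> carrier_mat (sum_list ns) (sum_list ns) \<Longrightarrow> block_diagonal ns M \<Longrightarrow> block_diagonal ns (adjoint_mat M)"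
  unfolding block_diagonal_def by auto

lemma diag_block_mult:
  assumes M: "M \<in> carrier_mat (sum_list ns) (sum_list ns)" and N: "N \<in> carrier_mat (sum_list ns) (sum_list ns)"
    and bd: "block_diagonal ns M" and b: "b < length ns"
  shows "diag_block ns (M * N) b = diag_block ns M b * diag_block ns N b"
proof (rule eq_matI)
  fix k l assume "k < dim_row (diag_block ns M b * diag_block ns N b)" "l < dim_col (diag_block ns M b * diag_block ns N b)"
  then have k: "k < ns ! b" and l: "l < ns ! b" by auto
  let ?o = "block_offset ns b"
  have bound: "?o + ns ! b \<le> sum_list ns" by (rule block_offset_bound[OF b])
  have outside: "M $$ (?o + k, t) = 0" if "t < sum_list ns" "\<not> (?o \<le> t \<and> t < ?o + ns ! b)" for t
    using bd that k bound block_index_offset[OF b k] block_index_eq_iff[of t ns b] b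
    unfolding block_diagonal_def by auto
  have "(M * N) $$ (?o + k, ?o + l) = (\<Sum>t<sum_list ns. M $$ (?o + k, t) * N $$ (t, ?o + l))"
    using M N k l bound by (subst index_mult_mat_sum[of _ "sum_list ns" "sum_list ns"]) auto
  also have "\<dots> = (\<Sum>t\<in>{?o..<?o + ns ! b}. M $$ (?o + k, t) * N $$ (t, ?o + l))"
    using bound outside by (intro sum.mono_neutral_right) auto
  also have "\<dots> = (\<Sum>t<ns ! b. M $$ (?o + k, ?o + t) * N $$ (?o + t, ?o + l))"
    by (subst sum.atLeastLessThan_shift_0) (simp add: lessThan_atLeast0)
  also have "\<dots> = (diag_block ns M b * diag_block ns N b) $$ (k,l)"
    using k l by (subst index_mult_mat_sum[of _ "ns ! b" "ns ! b"]) auto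
  finally show "diag_block ns (M * N) b $$ (k,l) = (diag_block ns M b * diag_block ns N b) $$ (k,l)"
    using k l by simp
qed auto

lemma diag_block_unitary:
  assumes U: "M \<in> unitary_mat (sum_list ns)" and bd: "block_diagonal ns M" and b: "b < length ns"
  shows "diag_block ns M b \<in> unitary_mat (ns ! b)"
proof (rule unitary_matI)
  note u = unitary_matD[OF U]
  have "diag_block ns (adjoint_mat M * M) b = adjoint_mat (diag_block ns M b) * diag_block ns M b"
    using u bd b by (subst diag_block_mult) (auto simp: block_diagonal_adjoint diag_block_adjoint)
  then show "adjoint_mat (diag_block ns M b) * diag_block ns M b = 1\<^sub>m (ns ! b)"
    using u b by (simp add: diag_block_one)
qed simp

lemma diag_block_mat_diag_blocks:
  assumes M: "M \<in> carrier_mat (sum_list ns) (sum_list ns)" and bd: "block_diagonal ns M"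
  shows "M = diag_block_mat (map (diag_block ns M) [0..<length ns])" (is "_ = diag_block_mat ?L")
proof -
  have dims: "map dim_row ?L = ns" "map dim_col ?L = ns" by (auto intro: nth_equalityI)
  show ?thesis
  proof (rule eq_matI)
    fix i j assume "i < dim_row (diag_block_mat ?L)" "j < dim_col (diag_block_mat ?L)"
    then have i: "i < sum_list ns" and j: "j < sum_list ns" by (simp_all only: dim_diag_block_mat dims)
    note bi = block_index_bounds[OF i] and bj = block_index_bounds[OF j]
    show "M $$ (i,j) = diag_block_mat ?L $$ (i,j)"
      using diag_block_mat_index[of ?L i j] dims i j bi bj block_index_less[OF i] bd
      unfolding block_diagonal_def by (cases "block_index ns i = block_index ns j") (auto simp: Let_def)
  qed (use M in \<open>simp_all only: dim_diag_block_mat dims carrier_matD\<close>)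
qed

section \<open>Pairs of matrices with unitary sum and difference\<close>

lemma half_one_plus_unitary_decomposition:
  assumes C: "C \<in> unitary_mat m"
  shows "\<exists>Q \<Phi> \<sigma>. Q \<in> unitary_mat m \<and> \<Phi> \<in> unitary_mat m \<and> (\<forall>k<m. 0 \<le> \<sigma> k \<and> \<sigma> k \<le> 1) \<and>
    (1/2) \<cdot>\<^sub>m (1\<^sub>m m + C) = Q * (\<Phi> * mat_diag m (\<lambda>k. complex_of_real (\<sigma> k))) * adjoint_mat Q"
proof -
  obtain Q t where Q: "Q \<in> unitary_mat m" and t: "\<forall>k<m. cmod (t k) = 1"
    and CQ: "C = Q * mat_diag m t * adjoint_mat Q"
    using unitary_mat_diagonalization[OF C] by blast
  note q = unitary_matD[OF Q]
  define \<sigma> where "\<sigma> k = cmod (1 + t k) / 2" for k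
  define \<phi> where "\<phi> k = (if 1 + t k = 0 then 1 else (1 + t k) / complex_of_real (cmod (1 + t k)))" for k
  have \<sigma>: "\<forall>k<m. 0 \<le> \<sigma> k \<and> \<sigma> k \<le> 1"
  proof (intro allI impI conjI)
    fix k assume "k < m"
    then show "\<sigma> k \<le> 1" using t norm_triangle_ineq[of 1 "t k"] by (simp add: \<sigma>_def)
  qed (simp add: \<sigma>_def)
  have \<phi>: "mat_diag m \<phi> \<in> unitary_mat m"
    by (rule mat_diag_unitary) (auto simp: \<phi>_def norm_divide)
  have polar: "\<phi> k * complex_of_real (\<sigma> k) = (1 + t k) / 2" for k
    by (auto simp: \<phi>_def \<sigma>_def of_real_divide)
  have "Q * ((1/2) \<cdot>\<^sub>m (1\<^sub>m m + mat_diag m t)) * adjoint_mat Q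
      = (1/2) \<cdot>\<^sub>m ((Q + Q * mat_diag m t) * adjoint_mat Q)"
    using q mult_add_distrib_mat[of Q m m "1\<^sub>m m" m "mat_diag m t"]
    by (simp add: mult_smult_distrib[of Q m m _ m] mult_smult_assoc_mat[of _ m m _ m])
  also have "(Q + Q * mat_diag m t) * adjoint_mat Q = 1\<^sub>m m + C"
    unfolding CQ using q by (subst add_mult_distrib_mat[of _ m m]) auto
  also have "(1/2) \<cdot>\<^sub>m (1\<^sub>m m + mat_diag m t) = mat_diag m \<phi> * mat_diag m (\<lambda>k. complex_of_real (\<sigma> k))"
    using polar by (intro eq_matI) (auto simp: add_divide_distrib)
  finally show ?thesis using Q \<phi> \<sigma> by metis
qed

lemma add_diff_unitary_svd:
  assumes X: "X \<in> carrier_mat m m" and Y: "Y \<in> carrier_mat m m"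
    and XY: "X + Y \<in> unitary_mat m" "X - Y \<in> unitary_mat m"
  shows "\<exists>U V \<sigma>. U \<in> unitary_mat m \<and> V \<in> unitary_mat m \<and> (\<forall>k<m. 0 \<le> \<sigma> k \<and> \<sigma> k \<le> 1) \<and>
    X = U * mat_diag m (\<lambda>k. complex_of_real (\<sigma> k)) * V"
proof -
  define A B where "A = X + Y" and "B = X - Y"
  have A: "A \<in> unitary_mat m" and B: "B \<in> unitary_mat m" using XY by (simp_all add: A_def B_def)
  note a = unitary_matD[OF A] and b = unitary_matD[OF B]
  obtain Q \<Phi> \<sigma> where Q: "Q \<in> unitary_mat m" and \<Phi>: "\<Phi> \<in> unitary_mat m" and \<sigma>: "\<forall>k<m. 0 \<le> \<sigma> k \<and> \<sigma> k \<le> 1"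
    and half: "(1/2) \<cdot>\<^sub>m (1\<^sub>m m + adjoint_mat A * B)
      = Q * (\<Phi> * mat_diag m (\<lambda>k. complex_of_real (\<sigma> k))) * adjoint_mat Q"
    using half_one_plus_unitary_decomposition[OF unitary_mat_mult[OF unitary_mat_adjoint[OF A] B]] by blast
  note q = unitary_matD[OF Q] and \<phi> = unitary_matD[OF \<Phi>]
  have "X = (1/2) \<cdot>\<^sub>m (A + B)"
    using X Y by (intro eq_matI) (auto simp: A_def B_def)
  also have "A + B = A * (1\<^sub>m m + adjoint_mat A * B)"
    using a b unitary_mat_cancel_left(2)[OF A, of B m] by (subst mult_add_distrib_mat[of _ m m]) auto
  also have "(1/2) \<cdot>\<^sub>m (A * (1\<^sub>m m + adjoint_mat A * B)) = A * ((1/2) \<cdot>\<^sub>m (1\<^sub>m m + adjoint_mat A * B))"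
    using a b by (subst mult_smult_distrib[of _ m m]) auto
  finally have "X = (A * Q * \<Phi>) * mat_diag m (\<lambda>k. complex_of_real (\<sigma> k)) * adjoint_mat Q"
    unfolding half using a q \<phi> by (simp add: mult_carrier_mat[of _ m m] assoc_mult_mat[of _ m m _ m _ m])
  then show ?thesis
    using \<sigma> unitary_mat_mult[OF unitary_mat_mult[OF A Q] \<Phi>] unitary_mat_adjoint[OF Q] by blast
qed

lemma sum_add_mult_add_diff:
  fixes a b c d :: "nat \<Rightarrow> 'a::comm_ring_1"
  shows "(\<Sum>l<n. (a l + b l) * (c l + d l)) + (\<Sum>l<n. (a l - b l) * (c l - d l))
      = 2 * ((\<Sum>l<n. a l * c l) + (\<Sum>l<n. b l * d l))"
    and "(\<Sum>l<n. (a l + b l) * (c l + d l)) - (\<Sum>l<n. (a l - b l) * (c l - d l))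
      = 2 * ((\<Sum>l<n. a l * d l) + (\<Sum>l<n. b l * c l))"
proof -
  have "(a l + b l) * (c l + d l) + (a l - b l) * (c l - d l) = 2 * (a l * c l + b l * d l)"
    and "(a l + b l) * (c l + d l) - (a l - b l) * (c l - d l) = 2 * (a l * d l + b l * c l)" for l
    by (simp_all add: algebra_simps)
  then show "(\<Sum>l<n. (a l + b l) * (c l + d l)) + (\<Sum>l<n. (a l - b l) * (c l - d l))
      = 2 * ((\<Sum>l<n. a l * c l) + (\<Sum>l<n. b l * d l))"
    and "(\<Sum>l<n. (a l + b l) * (c l + d l)) - (\<Sum>l<n. (a l - b l) * (c l - d l))
      = 2 * ((\<Sum>l<n. a l * d l) + (\<Sum>l<n. b l * c l))"
    by (simp_all only: sum.distrib[symmetric] sum_subtractf[symmetric] sum_distrib_left)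
qed

lemma adjoint_mat_parallelogram:
  assumes P: "P \<in> carrier_mat n k" and Q: "Q \<in> carrier_mat n k"
  shows "adjoint_mat (P + Q) * (P + Q) + adjoint_mat (P - Q) * (P - Q)
      = 2 \<cdot>\<^sub>m (adjoint_mat P * P + adjoint_mat Q * Q)" (is "?sum = _")
    and "adjoint_mat (P + Q) * (P + Q) - adjoint_mat (P - Q) * (P - Q)
      = 2 \<cdot>\<^sub>m (adjoint_mat P * Q + adjoint_mat Q * P)" (is "?diff = _")
proof -
  have PQ: "P + Q \<in> carrier_mat n k" "P - Q \<in> carrier_mat n k"
    using P Q by (auto intro: minus_carrier_mat)
  have add_entry: "(adjoint_mat (P + Q) * (P + Q)) $$ (i,j) = (\<Sum>l<n. cnj (P $$ (l,i) + Q $$ (l,i)) * (P $$ (l,j) + Q $$ (l,j)))"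
    if "i < k" "j < k" for i j
    using P Q that by (subst index_adjoint_mat_mult[OF PQ(1) PQ(1)]) (auto intro!: sum.cong)
  have diff_entry: "(adjoint_mat (P - Q) * (P - Q)) $$ (i,j) = (\<Sum>l<n. cnj (P $$ (l,i) - Q $$ (l,i)) * (P $$ (l,j) - Q $$ (l,j)))"
    if "i < k" "j < k" for i j
    using P Q that by (subst index_adjoint_mat_mult[OF PQ(2) PQ(2)]) (auto intro!: sum.cong)
  note entries = add_entry diff_entry index_adjoint_mat_mult[OF P P] index_adjoint_mat_mult[OF Q Q]
    index_adjoint_mat_mult[OF P Q] index_adjoint_mat_mult[OF Q P]
  show "?sum = 2 \<cdot>\<^sub>m (adjoint_mat P * P + adjoint_mat Q * Q)"
    using P Q by (intro eq_matI) (simp_all add: entries sum_add_mult_add_diff del: index_mult_mat(1))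
  show "?diff = 2 \<cdot>\<^sub>m (adjoint_mat P * Q + adjoint_mat Q * P)"
    using P Q by (intro eq_matI) (simp_all add: entries sum_add_mult_add_diff del: index_mult_mat(1))
qed

lemma unitary_add_diff_gram:
  assumes P: "P \<in> carrier_mat n n" and Q: "Q \<in> carrier_mat n n"
    and PQ: "P + Q \<in> unitary_mat n" "P - Q \<in> unitary_mat n"
  shows "adjoint_mat P * P + adjoint_mat Q * Q = 1\<^sub>m n"
    and "adjoint_mat P * Q + adjoint_mat Q * P = 0\<^sub>m n n"
proof -
  have "2 \<cdot>\<^sub>m (adjoint_mat P * P + adjoint_mat Q * Q) = 1\<^sub>m n + 1\<^sub>m n"
    using adjoint_mat_parallelogram(1)[OF P Q] unitary_matD(2)[OF PQ(1)] unitary_matD(2)[OF PQ(2)] by simp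
  also have "\<dots> = 2 \<cdot>\<^sub>m 1\<^sub>m n" by (rule eq_matI) auto
  finally show "adjoint_mat P * P + adjoint_mat Q * Q = 1\<^sub>m n" by (rule smult_mat_cancel[rotated]) simp
  have "2 \<cdot>\<^sub>m (adjoint_mat P * Q + adjoint_mat Q * P) = 1\<^sub>m n - 1\<^sub>m n"
    using adjoint_mat_parallelogram(2)[OF P Q] unitary_matD(2)[OF PQ(1)] unitary_matD(2)[OF PQ(2)] by simp
  also have "\<dots> = 2 \<cdot>\<^sub>m 0\<^sub>m n n" by (rule eq_matI) auto
  finally show "adjoint_mat P * Q + adjoint_mat Q * P = 0\<^sub>m n n" by (rule smult_mat_cancel[rotated]) simp
qed

lemma scalar_add_diff_unitary:
  assumes B: "B \<in> carrier_mat n n"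
    and u: "complex_of_real v \<cdot>\<^sub>m 1\<^sub>m n + B \<in> unitary_mat n" "complex_of_real v \<cdot>\<^sub>m 1\<^sub>m n - B \<in> unitary_mat n"
  shows "adjoint_mat B * B = complex_of_real (1 - v\<^sup>2) \<cdot>\<^sub>m 1\<^sub>m n"
    and "complex_of_real v \<cdot>\<^sub>m (B + adjoint_mat B) = 0\<^sub>m n n"
proof -
  let ?P = "complex_of_real v \<cdot>\<^sub>m 1\<^sub>m n"
  have P: "?P \<in> carrier_mat n n" by simp
  have adjP: "adjoint_mat ?P = ?P" by (simp add: adjoint_mat_smult)
  note gram = unitary_add_diff_gram[OF P B u, unfolded adjP]
  show "adjoint_mat B * B = complex_of_real (1 - v\<^sup>2) \<cdot>\<^sub>m 1\<^sub>m n"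
  proof (rule eq_matI)
    fix k l assume "k < dim_row (complex_of_real (1 - v\<^sup>2) \<cdot>\<^sub>m 1\<^sub>m n)"
      "l < dim_col (complex_of_real (1 - v\<^sup>2) \<cdot>\<^sub>m 1\<^sub>m n)"
    then have kl: "k < n" "l < n" by auto
    have "(?P * ?P) $$ (k,l) + (adjoint_mat B * B) $$ (k,l) = 1\<^sub>m n $$ (k,l)"
      using arg_cong[OF gram(1), of "\<lambda>M. M $$ (k,l)"] B kl by simp
    then show "(adjoint_mat B * B) $$ (k,l) = (complex_of_real (1 - v\<^sup>2) \<cdot>\<^sub>m 1\<^sub>m n) $$ (k,l)"
      using kl by (simp add: smult_one_mat_mult[OF P] power2_eq_square algebra_simps)
  qed (use B in auto)
  have "?P * B + adjoint_mat B * ?P = complex_of_real v \<cdot>\<^sub>m (B + adjoint_mat B)"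
    using B by (simp add: smult_one_mat_mult mult_smult_one_mat[of "adjoint_mat B" n n]
        add_smult_distrib_left_mat[of _ n n])
  with gram(2) show "complex_of_real v \<cdot>\<^sub>m (B + adjoint_mat B) = 0\<^sub>m n n" by simp
qed

lemma hermitian_unitary_of_skew:
  assumes B: "B \<in> carrier_mat n n" and skew: "B + adjoint_mat B = 0\<^sub>m n n"
    and gram: "adjoint_mat B * B = complex_of_real (c\<^sup>2) \<cdot>\<^sub>m 1\<^sub>m n" and c: "c > 0"
  shows "(- \<i> / complex_of_real c) \<cdot>\<^sub>m B \<in> hermitian_mat n \<inter> unitary_mat n"
proof -
  let ?H = "(- \<i> / complex_of_real c) \<cdot>\<^sub>m B"
  have H: "?H \<in> carrier_mat n n" using B by simp
  have adjB: "adjoint_mat B = - 1 \<cdot>\<^sub>m B"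
  proof (rule eq_matI)
    fix i j assume "i < dim_row (- 1 \<cdot>\<^sub>m B)" "j < dim_col (- 1 \<cdot>\<^sub>m B)"
    with B arg_cong[OF skew, of "\<lambda>M. M $$ (i,j)"]
    show "adjoint_mat B $$ (i,j) = (- 1 \<cdot>\<^sub>m B) $$ (i,j)" by (auto simp: add_eq_0_iff)
  qed (use B in auto)
  have "adjoint_mat ?H = ?H"
    using B by (auto simp: adjoint_mat_smult adjB intro!: eq_matI)
  moreover have "adjoint_mat ?H * ?H = 1\<^sub>m n"
    using B c by (auto simp: adjoint_mat_smult mult_smult_assoc_mat[of _ n n _ n] mult_smult_distrib[of _ n n _ n] gram
        power2_eq_square intro!: eq_matI)
  ultimately show ?thesis
    using H unitary_matI[OF H] unfolding hermitian_mat_def by auto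
qed

lemma scalar_add_diff_unitary_cases:
  assumes B: "B \<in> carrier_mat n n"
    and u: "complex_of_real v \<cdot>\<^sub>m 1\<^sub>m n + B \<in> unitary_mat n" "complex_of_real v \<cdot>\<^sub>m 1\<^sub>m n - B \<in> unitary_mat n"
  shows "v = 1 \<Longrightarrow> B = 0\<^sub>m n n"
    and "v = 0 \<Longrightarrow> B \<in> unitary_mat n"
    and "0 < v \<Longrightarrow> v < 1 \<Longrightarrow>
      \<exists>H. H \<in> hermitian_mat n \<inter> unitary_mat n \<and> B = (\<i> * complex_of_real (sqrt (1 - v\<^sup>2))) \<cdot>\<^sub>m H"
proof -
  note gram = scalar_add_diff_unitary[OF B u]
  show "B = 0\<^sub>m n n" if "v = 1"
  proof (rule adjoint_mat_mult_self_eq_0[OF B])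
    show "adjoint_mat B * B = 0\<^sub>m n n" using gram(1) that B by (intro eq_matI) auto
  qed
  show "B \<in> unitary_mat n" if "v = 0"
  proof -
    have "complex_of_real v \<cdot>\<^sub>m 1\<^sub>m n + B = B" using that B by (intro eq_matI) auto
    with u(1) show ?thesis by simp
  qed
  assume v: "0 < v" "v < 1"
  define c where "c = sqrt (1 - v\<^sup>2)"
  have "v\<^sup>2 < 1" using v by (simp add: abs_square_less_1)
  then have c: "c > 0" and c2: "c\<^sup>2 = 1 - v\<^sup>2"
    unfolding c_def by (simp_all add: real_sqrt_gt_zero)
  have skew: "B + adjoint_mat B = 0\<^sub>m n n"
    by (rule smult_mat_cancel[of "complex_of_real v"]) (use gram(2) v in simp_all)
  have "adjoint_mat B * B = complex_of_real (c\<^sup>2) \<cdot>\<^sub>m 1\<^sub>m n"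
    using gram(1) by (simp only: c2)
  from hermitian_unitary_of_skew[OF B skew this c]
  have "(- \<i> / complex_of_real c) \<cdot>\<^sub>m B \<in> hermitian_mat n \<inter> unitary_mat n" .
  moreover have "B = (\<i> * complex_of_real c) \<cdot>\<^sub>m ((- \<i> / complex_of_real c) \<cdot>\<^sub>m B)"
    using B c by (intro eq_matI) (simp_all add: field_simps)
  ultimately show "\<exists>H. H \<in> hermitian_mat n \<inter> unitary_mat n \<and> B = (\<i> * complex_of_real (sqrt (1 - v\<^sup>2))) \<cdot>\<^sub>m H"
    unfolding c_def[symmetric] by blast
qed

lemma add_diff_unitary_diag_entry_eq_0:
  fixes d :: "nat \<Rightarrow> real"
  assumes Z: "Z \<in> carrier_mat n n" and d: "\<forall>i<n. 0 \<le> d i"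
    and u: "mat_diag n (\<lambda>i. complex_of_real (d i)) + Z \<in> unitary_mat n"
      "mat_diag n (\<lambda>i. complex_of_real (d i)) - Z \<in> unitary_mat n"
    and ij: "i < n" "j < n" "d i \<noteq> d j"
  shows "Z $$ (i,j) = 0"
proof -
  let ?D = "mat_diag n (\<lambda>i. complex_of_real (d i))"
  let ?G = "mat_diag n (\<lambda>i. 1 - (complex_of_real (d i))\<^sup>2)"
  have D: "?D \<in> carrier_mat n n" and adjD: "adjoint_mat ?D = ?D" by (simp_all add: adjoint_mat_diag)
  have DD: "?D * ?D = mat_diag n (\<lambda>i. (complex_of_real (d i))\<^sup>2)" by (simp add: power2_eq_square)
  have u': "?D + adjoint_mat Z \<in> unitary_mat n" "?D - adjoint_mat Z \<in> unitary_mat n"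
    using unitary_mat_adjoint[OF u(1)] unitary_mat_adjoint[OF u(2)] Z
    by (simp_all add: adjoint_mat_add[of _ n n] adjoint_mat_minus[of _ n n] adjD)
  have "adjoint_mat Z * Z = ?G"
    using unitary_add_diff_gram(1)[OF D Z u] adjD DD Z by (intro add_eq_one_mat_diag) auto
  moreover have "Z * adjoint_mat Z = ?G"
    using unitary_add_diff_gram(1)[OF D _ u'] adjD DD Z by (intro add_eq_one_mat_diag) auto
  ultimately have "Z * ?G = ?G * Z"
    using Z by (metis adjoint_mat_carrier assoc_mult_mat)
  moreover have "1 - (complex_of_real (d i))\<^sup>2 \<noteq> 1 - (complex_of_real (d j))\<^sup>2"
  proof -
    have "(d i)\<^sup>2 \<noteq> (d j)\<^sup>2" using d ij by (simp add: power2_eq_iff_nonneg)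
    then show ?thesis by (metis add_diff_cancel_left' diff_add_cancel of_real_eq_iff of_real_power)
  qed
  ultimately show ?thesis using commute_mat_diag_eq_0[OF Z] ij by blast
qed

lemma add_diff_unitary_transfer:
  assumes U: "U \<in> unitary_mat n" and V: "V \<in> unitary_mat n"
    and D: "D \<in> carrier_mat n n" and Y: "Y \<in> carrier_mat n n"
    and XY: "U * D * V + Y \<in> unitary_mat n" "U * D * V - Y \<in> unitary_mat n"
  shows "D + adjoint_mat U * Y * adjoint_mat V \<in> unitary_mat n"
    and "D - adjoint_mat U * Y * adjoint_mat V \<in> unitary_mat n"
proof -
  note u = unitary_matD[OF U] and v = unitary_matD[OF V]
  define Z where "Z = adjoint_mat U * Y * adjoint_mat V"
  have Z: "Z \<in> carrier_mat n n" unfolding Z_def using u v Y by auto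
  have YZ: "Y = U * Z * V" unfolding Z_def using unitary_mat_sandwich[OF U V Y] by simp
  have "U * D * V + Y = U * (D + Z) * V"
    unfolding YZ using u v D Z by (simp add: mult_add_distrib_mat[of U n n] add_mult_distrib_mat[of _ n n])
  then show "D + adjoint_mat U * Y * adjoint_mat V \<in> unitary_mat n"
    using XY(1) unitary_mat_cancel_sides[OF U V] D Z unfolding Z_def by auto
  have "U * D * V - Y = U * (D - Z) * V"
    unfolding YZ using u v D Z by (simp add: mult_minus_distrib_mat[of U n n] minus_mult_distrib_mat[of _ n n])
  then show "D - adjoint_mat U * Y * adjoint_mat V \<in> unitary_mat n"
    using XY(2) unitary_mat_cancel_sides[OF U V] D Z minus_carrier_mat[OF Z] unfolding Z_def by auto
qed

lemma add_diff_unitary_block_diagonal: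
  fixes c :: "nat \<Rightarrow> real"
  assumes c_inj: "inj_on c {..<length ns}" and c_nonneg: "\<forall>b<length ns. 0 \<le> c b"
    and Z: "Z \<in> carrier_mat (sum_list ns) (sum_list ns)"
    and DZ: "mat_diag (sum_list ns) (\<lambda>i. complex_of_real (c (block_index ns i))) + Z \<in> unitary_mat (sum_list ns)"
      "mat_diag (sum_list ns) (\<lambda>i. complex_of_real (c (block_index ns i))) - Z \<in> unitary_mat (sum_list ns)"
  shows "block_diagonal ns Z"
  unfolding block_diagonal_def
proof (intro allI impI)
  fix i j assume i: "i < sum_list ns" and j: "j < sum_list ns" and ij: "block_index ns i \<noteq> block_index ns j"
  have "c (block_index ns i) \<noteq> c (block_index ns j)"
    using c_inj ij block_index_less[OF i] block_index_less[OF j] by (auto dest: inj_onD)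
  then show "Z $$ (i,j) = 0"
    using add_diff_unitary_diag_entry_eq_0[OF Z _ DZ i j] c_nonneg block_index_less by auto
qed

lemma add_diff_unitary_block_decomposition:
  fixes c :: "nat \<Rightarrow> real"
  assumes U: "U \<in> unitary_mat (sum_list ns)" and V: "V \<in> unitary_mat (sum_list ns)"
    and c_inj: "inj_on c {..<length ns}" and c_nonneg: "\<forall>b<length ns. 0 \<le> c b"
    and X: "X = U * diag_block_mat (map (\<lambda>b. complex_of_real (c b) \<cdot>\<^sub>m 1\<^sub>m (ns ! b)) [0..<length ns]) * V"
    and Y: "Y \<in> carrier_mat (sum_list ns) (sum_list ns)"
    and XY: "X + Y \<in> unitary_mat (sum_list ns)" "X - Y \<in> unitary_mat (sum_list ns)"
  shows "\<exists>Bs. length Bs = length ns \<and> Y = U * diag_block_mat Bs * V \<and>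
    (\<forall>b<length ns. Bs ! b \<in> carrier_mat (ns ! b) (ns ! b) \<and>
      complex_of_real (c b) \<cdot>\<^sub>m 1\<^sub>m (ns ! b) + Bs ! b \<in> unitary_mat (ns ! b) \<and>
      complex_of_real (c b) \<cdot>\<^sub>m 1\<^sub>m (ns ! b) - Bs ! b \<in> unitary_mat (ns ! b))"
proof -
  let ?m = "sum_list ns"
  define Z where "Z = adjoint_mat U * Y * adjoint_mat V"
  define D where "D = mat_diag ?m (\<lambda>i. complex_of_real (c (block_index ns i)))"
  have Z: "Z \<in> carrier_mat ?m ?m" unfolding Z_def using unitary_matD(1)[OF U] unitary_matD(1)[OF V] Y by auto
  have D: "D \<in> carrier_mat ?m ?m" unfolding D_def by simp
  have "X = U * D * V" unfolding X D_def diag_block_mat_scalars ..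
  note DZ = add_diff_unitary_transfer[OF U V D Y XY[unfolded this], folded Z_def]
  have bdZ: "block_diagonal ns Z"
    using add_diff_unitary_block_diagonal[OF c_inj c_nonneg Z DZ[unfolded D_def]] .
  have bdD: "block_diagonal ns D" unfolding D_def by (rule block_diagonal_mat_diag)
  define Bs where "Bs = map (diag_block ns Z) [0..<length ns]"
  have "Y = U * diag_block_mat Bs * V"
    unfolding Bs_def using diag_block_mat_diag_blocks[OF Z bdZ] unitary_mat_sandwich[OF U V Y] Z_def by simp
  moreover have "complex_of_real (c b) \<cdot>\<^sub>m 1\<^sub>m (ns ! b) + Bs ! b \<in> unitary_mat (ns ! b)"
    and "complex_of_real (c b) \<cdot>\<^sub>m 1\<^sub>m (ns ! b) - Bs ! b \<in> unitary_mat (ns ! b)" if b: "b < length ns" for b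
  proof -
    have "diag_block ns D b = complex_of_real (c b) \<cdot>\<^sub>m 1\<^sub>m (ns ! b)"
      unfolding D_def by (rule diag_block_mat_diag[OF b])
    then show "complex_of_real (c b) \<cdot>\<^sub>m 1\<^sub>m (ns ! b) + Bs ! b \<in> unitary_mat (ns ! b)"
      and "complex_of_real (c b) \<cdot>\<^sub>m 1\<^sub>m (ns ! b) - Bs ! b \<in> unitary_mat (ns ! b)"
      using diag_block_unitary[OF DZ(1) block_diagonal_add[OF D Z bdD bdZ] b]
        diag_block_unitary[OF DZ(2) block_diagonal_minus[OF D Z bdD bdZ] b]
      by (simp_all add: Bs_def b diag_block_add[OF D Z b] diag_block_minus[OF D Z b])
  qed
  ultimately show ?thesis
    by (intro exI[of _ Bs]) (simp add: Bs_def)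
qed

section \<open>The canonical block form\<close>

definition block_sizes :: "nat \<Rightarrow> nat \<Rightarrow> nat \<Rightarrow> (nat \<Rightarrow> nat) \<Rightarrow> nat list" where
  "block_sizes p q r ms = [p, q] @ map ms [0..<r]"

definition block_values :: "nat \<Rightarrow> (nat \<Rightarrow> real) \<Rightarrow> nat \<Rightarrow> real" where
  "block_values r s b = ([1, 0] @ map s [0..<r]) ! b"

lemma length_block_sizes[simp]: "length (block_sizes p q r ms) = r + 2"
  by (simp add: block_sizes_def)

lemma sum_list_block_sizes: "sum_list (block_sizes p q r ms) = p + q + (\<Sum>j<r. ms j)"
  by (simp add: block_sizes_def interv_sum_list_conv_sum_set_nat lessThan_atLeast0)

lemma block_sizes_nth[simp]:
  "block_sizes p q r ms ! 0 = p" "block_sizes p q r ms ! Suc 0 = q"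
  "j < r \<Longrightarrow> block_sizes p q r ms ! Suc (Suc j) = ms j"
  by (simp_all add: block_sizes_def nth_append)

lemma block_values_nth[simp]:
  "block_values r s 0 = 1" "block_values r s (Suc 0) = 0" "j < r \<Longrightarrow> block_values r s (Suc (Suc j)) = s j"
  by (simp_all add: block_values_def nth_append)

lemma less_add_2_cases:
  fixes b r :: nat
  assumes "b < r + 2"
  obtains "b = 0" | "b = Suc 0" | j where "b = Suc (Suc j)" "j < r"
  using assms by (cases b; cases "b - 1") auto

lemma canonical_diag_blocks:
  "[1\<^sub>m p, 0\<^sub>m q q] @ map (\<lambda>j. complex_of_real (s j) \<cdot>\<^sub>m 1\<^sub>m (ms j)) [0..<r]
    = map (\<lambda>b. complex_of_real (block_values r s b) \<cdot>\<^sub>m 1\<^sub>m (block_sizes p q r ms ! b)) [0..<r + 2]"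
    (is "?L = map ?f _")
proof (rule nth_equalityI)
  fix b assume "b < length ?L"
  then have b: "b < r + 2" by simp
  have "?L ! b = ?f b"
    using b by (cases rule: less_add_2_cases) (auto intro!: eq_matI simp: nth_append)
  also have "?f b = map ?f [0..<r + 2] ! b"
    using b by (simp only: nth_map_upt diff_zero add_0)
  finally show "?L ! b = map ?f [0..<r + 2] ! b" .
qed simp

lemma canonical_diag_block_mat:
  "diag_block_mat ([1\<^sub>m p, 0\<^sub>m q q] @ map (\<lambda>j. complex_of_real (s j) \<cdot>\<^sub>m 1\<^sub>m (ms j)) [0..<r])
    = mat_diag (sum_list (block_sizes p q r ms))
        (\<lambda>i. complex_of_real (block_values r s (block_index (block_sizes p q r ms) i)))"
  unfolding canonical_diag_blocks
  using diag_block_mat_scalars[of "\<lambda>b. complex_of_real (block_values r s b)" "block_sizes p q r ms"]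
  by simp

lemma block_values_inj:
  assumes s: "\<forall>j<r. 0 < s j \<and> s j < 1" and dec: "\<forall>i j. i < j \<and> j < r \<longrightarrow> s j < s i"
  shows "inj_on (block_values r s) {..<r + 2}"
proof -
  have "inj_on s {0..<r}"
    unfolding inj_on_def by (metis atLeastLessThan_iff dec less_irrefl linorder_neqE_nat)
  then have "distinct (map s [0..<r])" by (simp add: distinct_map)
  moreover have "1 \<notin> set (map s [0..<r])" "0 \<notin> set (map s [0..<r])" using s by auto
  ultimately have "distinct ([1, 0] @ map s [0..<r])" by simp
  then show ?thesis
    unfolding block_values_def inj_on_def by (simp add: nth_eq_iff_index_eq)
qed

lemma block_values_nonneg:
  assumes "\<forall>j<r. 0 < s j \<and> s j < 1" and "b < r + 2"
  shows "0 \<le> block_values r s b"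
  using assms(2) by (cases rule: less_add_2_cases) (use assms(1) in auto)

lemma canonical_partner_blocks:
  fixes s :: "nat \<Rightarrow> real"
  assumes s: "\<forall>j<r. 0 < s j \<and> s j < 1" and len: "length Bs = r + 2"
    and blocks: "\<forall>b<r + 2. Bs ! b \<in> carrier_mat (block_sizes p q r ms ! b) (block_sizes p q r ms ! b) \<and>
      complex_of_real (block_values r s b) \<cdot>\<^sub>m 1\<^sub>m (block_sizes p q r ms ! b) + Bs ! b
        \<in> unitary_mat (block_sizes p q r ms ! b) \<and>
      complex_of_real (block_values r s b) \<cdot>\<^sub>m 1\<^sub>m (block_sizes p q r ms ! b) - Bs ! b
        \<in> unitary_mat (block_sizes p q r ms ! b)"
  shows "\<exists>W H. W \<in> unitary_mat q \<and> (\<forall>j<r. H j \<in> hermitian_mat (ms j) \<inter> unitary_mat (ms j)) \<and>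
    Bs = [0\<^sub>m p p, W] @ map (\<lambda>j. (\<i> * complex_of_real (sqrt (1 - (s j)\<^sup>2))) \<cdot>\<^sub>m H j) [0..<r]"
proof -
  have "Bs ! b \<in> carrier_mat (block_sizes p q r ms ! b) (block_sizes p q r ms ! b)"
    "complex_of_real (block_values r s b) \<cdot>\<^sub>m 1\<^sub>m (block_sizes p q r ms ! b) + Bs ! b
      \<in> unitary_mat (block_sizes p q r ms ! b)"
    "complex_of_real (block_values r s b) \<cdot>\<^sub>m 1\<^sub>m (block_sizes p q r ms ! b) - Bs ! b
      \<in> unitary_mat (block_sizes p q r ms ! b)" if "b < r + 2" for b
    using blocks that by auto
  note block_cases = scalar_add_diff_unitary_cases[OF this]
  have B0: "Bs ! 0 = 0\<^sub>m p p"
    using block_cases(1)[of 0] by simp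
  have W: "Bs ! Suc 0 \<in> unitary_mat q"
    using block_cases(2)[of "Suc 0"] by simp
  have "\<forall>j. \<exists>H. j < r \<longrightarrow> H \<in> hermitian_mat (ms j) \<inter> unitary_mat (ms j) \<and>
      Bs ! Suc (Suc j) = (\<i> * complex_of_real (sqrt (1 - (s j)\<^sup>2))) \<cdot>\<^sub>m H"
  proof
    fix j
    show "\<exists>H. j < r \<longrightarrow> H \<in> hermitian_mat (ms j) \<inter> unitary_mat (ms j) \<and>
      Bs ! Suc (Suc j) = (\<i> * complex_of_real (sqrt (1 - (s j)\<^sup>2))) \<cdot>\<^sub>m H"
      using block_cases(3)[of "Suc (Suc j)"] s by (cases "j < r") simp_all
  qed
  then obtain H where H: "\<forall>j. j < r \<longrightarrow> H j \<in> hermitian_mat (ms j) \<inter> unitary_mat (ms j) \<and>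
      Bs ! Suc (Suc j) = (\<i> * complex_of_real (sqrt (1 - (s j)\<^sup>2))) \<cdot>\<^sub>m H j"
    by (rule exE[OF choice])
  have "Bs = [0\<^sub>m p p, Bs ! Suc 0] @ map (\<lambda>j. (\<i> * complex_of_real (sqrt (1 - (s j)\<^sup>2))) \<cdot>\<^sub>m H j) [0..<r]"
  proof (rule nth_equalityI)
    fix b assume "b < length Bs"
    then have "b < r + 2" using len by simp
    then show "Bs ! b = ([0\<^sub>m p p, Bs ! Suc 0] @ map (\<lambda>j. (\<i> * complex_of_real (sqrt (1 - (s j)\<^sup>2))) \<cdot>\<^sub>m H j) [0..<r]) ! b"
      by (cases rule: less_add_2_cases) (simp_all add: B0 H nth_append)
  qed (simp add: len)
  with W H show ?thesis by blast
qed

lemma canonical_form_partner: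
  fixes s :: "nat \<Rightarrow> real"
  assumes U: "U \<in> unitary_mat m" and V: "V \<in> unitary_mat m"
    and s: "\<forall>j<r. 0 < s j \<and> s j < 1" and dec: "\<forall>i j. i < j \<and> j < r \<longrightarrow> s j < s i"
    and msum: "p + q + (\<Sum>j<r. ms j) = m"
    and X: "X = U * diag_block_mat ([1\<^sub>m p, 0\<^sub>m q q] @
      map (\<lambda>j. complex_of_real (s j) \<cdot>\<^sub>m 1\<^sub>m (ms j)) [0..<r]) * V"
    and Y: "Y \<in> carrier_mat m m" and XY: "X + Y \<in> unitary_mat m" "X - Y \<in> unitary_mat m"
  shows "\<exists>W H. W \<in> unitary_mat q \<and> (\<forall>j<r. H j \<in> hermitian_mat (ms j) \<inter> unitary_mat (ms j)) \<and>
    Y = U * diag_block_mat ([0\<^sub>m p p, W] @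
      map (\<lambda>j. (\<i> * complex_of_real (sqrt (1 - (s j)\<^sup>2))) \<cdot>\<^sub>m H j) [0..<r]) * V"
proof -
  define ns where "ns = block_sizes p q r ms"
  have m: "sum_list ns = m" using msum by (simp add: ns_def sum_list_block_sizes)
  have "X = U * diag_block_mat (map (\<lambda>b. complex_of_real (block_values r s b) \<cdot>\<^sub>m 1\<^sub>m (ns ! b))
      [0..<length ns]) * V"
    unfolding X canonical_diag_blocks ns_def by simp
  from add_diff_unitary_block_decomposition[of U ns V "block_values r s", unfolded m, OF U V _ _ this Y XY]
  obtain Bs where "length Bs = r + 2" and YB: "Y = U * diag_block_mat Bs * V"
    and "\<forall>b<r + 2. Bs ! b \<in> carrier_mat (ns ! b) (ns ! b) \<and>
      complex_of_real (block_values r s b) \<cdot>\<^sub>m 1\<^sub>m (ns ! b) + Bs ! b \<in> unitary_mat (ns ! b) \<and>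
      complex_of_real (block_values r s b) \<cdot>\<^sub>m 1\<^sub>m (ns ! b) - Bs ! b \<in> unitary_mat (ns ! b)"
    using block_values_inj[OF s dec] block_values_nonneg[OF s] by (auto simp: ns_def)
  from canonical_partner_blocks[OF s this(1) this(3)[unfolded ns_def]]
  obtain W and H :: "nat \<Rightarrow> complex mat" where "W \<in> unitary_mat q"
    and "\<forall>j<r. H j \<in> hermitian_mat (ms j) \<inter> unitary_mat (ms j)"
    and "Bs = [0\<^sub>m p p, W] @ map (\<lambda>j. (\<i> * complex_of_real (sqrt (1 - (s j)\<^sup>2))) \<cdot>\<^sub>m H j) [0..<r]"
    by blast
  then show ?thesis unfolding YB by blast
qed

section \<open>Sorting the diagonal\<close>

definition permutation_mat :: "nat \<Rightarrow> (nat \<Rightarrow> nat) \<Rightarrow> complex mat" where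
  "permutation_mat n g = mat n n (\<lambda>(i,j). if j = g i then 1 else 0)"

lemma permutation_mat_unitary:
  assumes g: "g permutes {..<n}"
  shows "permutation_mat n g \<in> unitary_mat n"
proof (rule unitary_matI)
  let ?P = "permutation_mat n g"
  show P: "?P \<in> carrier_mat n n" unfolding permutation_mat_def by simp
  have inv: "inv_into UNIV g k < n" "g (inv_into UNIV g k) = k" if "k < n" for k
    using permutes_in_image[OF permutes_inv[OF g]] permutes_inverses(1)[OF g] that by auto
  show "adjoint_mat ?P * ?P = 1\<^sub>m n"
  proof (rule eq_matI)
    fix k l assume "k < dim_row (1\<^sub>m n)" "l < dim_col (1\<^sub>m n)"
    then have k: "k < n" and l: "l < n" by auto
    have "(adjoint_mat ?P * ?P) $$ (k,l) = (\<Sum>i<n. cnj (?P $$ (i,k)) * ?P $$ (i,l))"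
      by (rule index_adjoint_mat_mult[OF P P k l])
    also have "\<dots> = cnj (?P $$ (inv_into UNIV g k, k)) * ?P $$ (inv_into UNIV g k, l)"
    proof (rule sum_lessThan_single[OF inv(1)[OF k]])
      fix i assume "i < n" "i \<noteq> inv_into UNIV g k"
      then have "g i \<noteq> k" using inv[OF k] permutes_inj[OF g] by (metis injD)
      with \<open>i < n\<close> k show "cnj (?P $$ (i,k)) * ?P $$ (i,l) = 0" unfolding permutation_mat_def by simp
    qed
    also have "\<dots> = 1\<^sub>m n $$ (k,l)" using inv[OF k] k l unfolding permutation_mat_def by auto
    finally show "(adjoint_mat ?P * ?P) $$ (k,l) = 1\<^sub>m n $$ (k,l)" .
  qed (use P in auto)
qed

lemma permutation_mat_conj_diag:
  assumes g: "g permutes {..<n}"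
  shows "permutation_mat n g * mat_diag n f * adjoint_mat (permutation_mat n g) = mat_diag n (\<lambda>i. f (g i))"
proof -
  let ?P = "permutation_mat n g"
  have P: "?P \<in> carrier_mat n n" unfolding permutation_mat_def by simp
  have gi: "g i < n" if "i < n" for i using permutes_in_image[OF g] that by auto
  have inj: "g i = g j \<longleftrightarrow> i = j" for i j using permutes_inj[OF g] by (auto dest: injD)
  show ?thesis
  proof (rule eq_matI)
    fix i j assume "i < dim_row (mat_diag n (\<lambda>i. f (g i)))" "j < dim_col (mat_diag n (\<lambda>i. f (g i)))"
    then have i: "i < n" and j: "j < n" by auto
    have "(?P * mat_diag n f * adjoint_mat ?P) $$ (i,j) = (\<Sum>k<n. ?P $$ (i,k) * f k * cnj (?P $$ (j,k)))"
      using P i j by (subst index_mult_mat_sum[of _ n n _ n]) (auto simp: mat_diag_mult_right[OF P])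
    also have "\<dots> = ?P $$ (i, g i) * f (g i) * cnj (?P $$ (j, g i))"
      by (rule sum_lessThan_single[OF gi[OF i]]) (use i in \<open>auto simp: permutation_mat_def\<close>)
    also have "\<dots> = mat_diag n (\<lambda>i. f (g i)) $$ (i,j)"
      using i j gi inj unfolding permutation_mat_def by auto
    finally show "(?P * mat_diag n f * adjoint_mat ?P) $$ (i,j) = mat_diag n (\<lambda>i. f (g i)) $$ (i,j)" .
  qed (use P in auto)
qed

lemma mat_diag_rearrange:
  fixes f g :: "nat \<Rightarrow> complex"
  assumes "mset (map f [0..<n]) = mset (map g [0..<n])"
  shows "\<exists>P. P \<in> unitary_mat n \<and> P * mat_diag n g * adjoint_mat P = mat_diag n f"
proof -
  obtain \<pi> where \<pi>: "\<pi> permutes {..<n}" and perm: "permute_list \<pi> (map g [0..<n]) = map f [0..<n]"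
    using mset_eq_permutation[OF assms] by auto
  have "f i = g (\<pi> i)" if "i < n" for i
    using arg_cong[OF perm, of "\<lambda>xs. xs ! i"] permute_list_nth[of \<pi> "map g [0..<n]" i] \<pi>
      permutes_in_image[OF \<pi>, of i] that by simp
  then have "mat_diag n f = mat_diag n (\<lambda>i. g (\<pi> i))" by (rule mat_diag_cong)
  with permutation_mat_unitary[OF \<pi>] permutation_mat_conj_diag[OF \<pi>] show ?thesis by metis
qed

lemma mset_block_values:
  "mset (map (\<lambda>i. c (block_index ns i)) [0..<sum_list ns]) = (\<Sum>b<length ns. replicate_mset (ns ! b) (c b))"
proof (induction ns arbitrary: c)
  case (Cons n ns)
  let ?f = "\<lambda>i. c (block_index (n # ns) i)"
  have "[0..<sum_list (n # ns)] = [0..<n] @ map (\<lambda>i. i + n) [0..<sum_list ns]"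
    by (simp add: upt_add_eq_append[of 0 n] map_add_upt add.commute)
  moreover have "map ?f [0..<n] = replicate n (c 0)"
    by (rule nth_equalityI) auto
  moreover have "map ?f (map (\<lambda>i. i + n) [0..<sum_list ns]) = map (\<lambda>i. (c \<circ> Suc) (block_index ns i)) [0..<sum_list ns]"
    by simp
  ultimately have "mset (map ?f [0..<sum_list (n # ns)])
      = replicate_mset n (c 0) + mset (map (\<lambda>i. (c \<circ> Suc) (block_index ns i)) [0..<sum_list ns])"
    by (simp only: map_append mset_append mset_replicate)
  then show ?case
    unfolding Cons.IH by (simp add: sum.lessThan_Suc_shift del: sum.lessThan_Suc)
qed simp

lemma mset_eq_sum_replicate_count:
  assumes "finite A" "set_mset M \<subseteq> A"
  shows "M = (\<Sum>x\<in>A. replicate_mset (count M x) x)"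
proof (rule multiset_eqI)
  fix y
  have "count (\<Sum>x\<in>A. replicate_mset (count M x) x) y = (\<Sum>x\<in>A. if y = x then count M x else 0)"
    by (simp add: count_sum)
  also have "\<dots> = count M y"
    using assms by (auto simp: sum.delta not_in_iff)
  finally show "count M y = count (\<Sum>x\<in>A. replicate_mset (count M x) x) y" ..
qed

lemma group_unit_interval_values:
  fixes \<sigma> :: "nat \<Rightarrow> real"
  assumes \<sigma>: "\<forall>k<m. 0 \<le> \<sigma> k \<and> \<sigma> k \<le> 1"
  shows "\<exists>p q ms s (r :: nat). mset (map \<sigma> [0..<m]) = replicate_mset p 1 + replicate_mset q 0 +
      (\<Sum>j<r. replicate_mset (ms j) (s j)) \<and>
    (\<forall>j<r. ms j > 0) \<and> (\<forall>j<r. 0 < s j \<and> s j < 1) \<and> (\<forall>i j. i < j \<and> j < r \<longrightarrow> s j < s i)"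
proof -
  define M where "M = mset (map \<sigma> [0..<m])"
  define S where "S = set_mset M \<inter> {0<..<1}"
  define sl where "sl = rev (sorted_list_of_set S)"
  define s where "s j = sl ! j" for j
  define ms where "ms j = count M (s j)" for j
  have fin: "finite S" unfolding S_def by simp
  have set_sl: "set sl = S" and dist: "distinct sl" and sorted: "sorted_wrt (>) sl"
    using fin by (simp_all add: sl_def sorted_wrt_rev)
  have sS: "s j \<in> S" if "j < length sl" for j using that set_sl by (auto simp: s_def)
  have "M = (\<Sum>x\<in>insert 1 (insert 0 S). replicate_mset (count M x) x)"
    by (rule mset_eq_sum_replicate_count) (use \<sigma> in \<open>auto simp: M_def S_def\<close>)
  also have "\<dots> = replicate_mset (count M 1) 1 + replicate_mset (count M 0) 0 + (\<Sum>x\<in>S. replicate_mset (count M x) x)"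
    using fin by (simp add: S_def add.assoc)
  also have "(\<Sum>x\<in>S. replicate_mset (count M x) x) = (\<Sum>j<length sl. replicate_mset (ms j) (s j))"
    unfolding set_sl[symmetric] sum_list_distinct_conv_sum_set[OF dist, symmetric] sum_list_sum_nth
    by (simp add: ms_def s_def lessThan_atLeast0)
  finally have decomp: "M = replicate_mset (count M 1) 1 + replicate_mset (count M 0) 0
    + (\<Sum>j<length sl. replicate_mset (ms j) (s j))" .
  have ms_pos: "\<forall>j<length sl. ms j > 0" using sS by (auto simp: ms_def S_def)
  have s_bounds: "\<forall>j<length sl. 0 < s j \<and> s j < 1" using sS by (auto simp: S_def)
  have s_dec: "\<forall>i j. i < j \<and> j < length sl \<longrightarrow> s j < s i"
    using sorted_wrt_nth_less[OF sorted] by (auto simp: s_def)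
  show ?thesis
    unfolding M_def[symmetric]
    by (rule exI[of _ "count M 1"], rule exI[of _ "count M 0"], rule exI[of _ ms], rule exI[of _ s],
        rule exI[of _ "length sl"]) (use decomp ms_pos s_bounds s_dec in simp)
qed

lemma mset_canonical_values:
  "mset (map (\<lambda>i. block_values r s (block_index (block_sizes p q r ms) i)) [0..<sum_list (block_sizes p q r ms)])
    = replicate_mset p 1 + replicate_mset q 0 + (\<Sum>j<r. replicate_mset (ms j) (s j))"
  unfolding mset_block_values by (simp add: sum.lessThan_Suc_shift del: sum.lessThan_Suc)

lemma mat_diag_canonical_sort:
  fixes \<sigma> :: "nat \<Rightarrow> real"
  assumes \<sigma>: "\<forall>k<m. 0 \<le> \<sigma> k \<and> \<sigma> k \<le> 1"
  shows "\<exists>P p q (r :: nat) ms (s :: nat \<Rightarrow> real). P \<in> unitary_mat m \<and>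
    (\<forall>j<r. ms j > 0) \<and> (\<forall>j<r. 0 < s j \<and> s j < 1) \<and> (\<forall>i j. i < j \<and> j < r \<longrightarrow> s j < s i) \<and>
    p + q + (\<Sum>j<r. ms j) = m \<and>
    P * mat_diag m (\<lambda>k. complex_of_real (\<sigma> k)) * adjoint_mat P
      = diag_block_mat ([1\<^sub>m p, 0\<^sub>m q q] @ map (\<lambda>j. complex_of_real (s j) \<cdot>\<^sub>m 1\<^sub>m (ms j)) [0..<r])"
proof -
  obtain p q :: nat and ms :: "nat \<Rightarrow> nat" and s :: "nat \<Rightarrow> real" and r :: nat
    where M: "mset (map \<sigma> [0..<m]) = replicate_mset p 1 + replicate_mset q 0 + (\<Sum>j<r. replicate_mset (ms j) (s j))"
      and ms: "\<forall>j<r. ms j > 0" and s: "\<forall>j<r. 0 < s j \<and> s j < 1"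
      and dec: "\<forall>i j. i < j \<and> j < r \<longrightarrow> s j < s i"
    using group_unit_interval_values[OF \<sigma>] by blast
  define ns where "ns = block_sizes p q r ms"
  define d where "d i = block_values r s (block_index ns i)" for i
  have mset_d: "mset (map d [0..<sum_list ns]) = mset (map \<sigma> [0..<m])"
    unfolding M d_def ns_def by (rule mset_canonical_values)
  then have m: "sum_list ns = m" using mset_eq_length[OF mset_d] by simp
  then have msum: "p + q + (\<Sum>j<r. ms j) = m" by (simp add: ns_def sum_list_block_sizes)
  obtain P where P: "P \<in> unitary_mat m"
    and PD: "P * mat_diag m (\<lambda>k. complex_of_real (\<sigma> k)) * adjoint_mat P = mat_diag m (\<lambda>i. complex_of_real (d i))"
  proof (rule mat_diag_rearrange[THEN exE])
    show "mset (map (\<lambda>i. complex_of_real (d i)) [0..<m]) = mset (map (\<lambda>k. complex_of_real (\<sigma> k)) [0..<m])"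
      using arg_cong[OF mset_d, of "image_mset complex_of_real"] unfolding m
      by (simp only: mset_map[symmetric] map_map comp_def)
  qed blast
  have D: "mat_diag m (\<lambda>i. complex_of_real (d i))
      = diag_block_mat ([1\<^sub>m p, 0\<^sub>m q q] @ map (\<lambda>j. complex_of_real (s j) \<cdot>\<^sub>m 1\<^sub>m (ms j)) [0..<r])"
    unfolding canonical_diag_block_mat m[symmetric] ns_def d_def ..
  show ?thesis
    by (rule exI[of _ P], rule exI[of _ p], rule exI[of _ q], rule exI[of _ r], rule exI[of _ ms], rule exI[of _ s])
      (use P PD D ms s dec msum in simp)
qed

lemma canonical_form_exists:
  assumes X: "X \<in> carrier_mat m m" and Y: "Y \<in> carrier_mat m m"
    and XY: "X + Y \<in> unitary_mat m" "X - Y \<in> unitary_mat m"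
  shows "\<exists>U V p q r ms (s :: nat \<Rightarrow> real). U \<in> unitary_mat m \<and> V \<in> unitary_mat m \<and>
    (\<forall>j<r. ms j > 0) \<and> (\<forall>j<r. 0 < s j \<and> s j < 1) \<and> (\<forall>i j. i < j \<and> j < r \<longrightarrow> s j < s i) \<and>
    p + q + (\<Sum>j<r. ms j) = m \<and>
    X = U * diag_block_mat ([1\<^sub>m p, 0\<^sub>m q q] @ map (\<lambda>j. complex_of_real (s j) \<cdot>\<^sub>m 1\<^sub>m (ms j)) [0..<r]) * V"
proof -
  obtain U0 V0 \<sigma> where U0: "U0 \<in> unitary_mat m" and V0: "V0 \<in> unitary_mat m"
    and \<sigma>: "\<forall>k<m. 0 \<le> \<sigma> k \<and> \<sigma> k \<le> 1" and X0: "X = U0 * mat_diag m (\<lambda>k. complex_of_real (\<sigma> k)) * V0"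
    using add_diff_unitary_svd[OF X Y XY] by blast
  obtain P and p q r :: nat and ms :: "nat \<Rightarrow> nat" and s :: "nat \<Rightarrow> real"
    where P: "P \<in> unitary_mat m" and data: "\<forall>j<r. ms j > 0" "\<forall>j<r. 0 < s j \<and> s j < 1"
      "\<forall>i j. i < j \<and> j < r \<longrightarrow> s j < s i" "p + q + (\<Sum>j<r. ms j) = m"
    and PD: "P * mat_diag m (\<lambda>k. complex_of_real (\<sigma> k)) * adjoint_mat P
      = diag_block_mat ([1\<^sub>m p, 0\<^sub>m q q] @ map (\<lambda>j. complex_of_real (s j) \<cdot>\<^sub>m 1\<^sub>m (ms j)) [0..<r])"
    using mat_diag_canonical_sort[OF \<sigma>] by blast
  note p = unitary_matD[OF P] and u0 = unitary_matD[OF U0] and v0 = unitary_matD[OF V0]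
  have "(U0 * adjoint_mat P) * (P * mat_diag m (\<lambda>k. complex_of_real (\<sigma> k)) * adjoint_mat P) * (P * V0) = X"
    using p u0 v0 X0 unitary_mat_cancel_left(1)[OF P, of V0 m]
      unitary_mat_cancel_left(1)[OF P, of "mat_diag m (\<lambda>k. complex_of_real (\<sigma> k)) * V0" m]
    by (simp add: mult_carrier_mat[of _ m m] assoc_mult_mat[of _ m m _ m _ m])
  then have XP: "X = (U0 * adjoint_mat P) * diag_block_mat ([1\<^sub>m p, 0\<^sub>m q q] @
      map (\<lambda>j. complex_of_real (s j) \<cdot>\<^sub>m 1\<^sub>m (ms j)) [0..<r]) * (P * V0)"
    unfolding PD ..
  have UV: "U0 * adjoint_mat P \<in> unitary_mat m" "P * V0 \<in> unitary_mat m"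
    using unitary_mat_mult[OF U0 unitary_mat_adjoint[OF P]] unitary_mat_mult[OF P V0] .
  show ?thesis
    by (rule exI[of _ "U0 * adjoint_mat P"], rule exI[of _ "P * V0"]) (use XP UV data in blast)
qed

theorem lemma3p7:
  fixes m :: nat and X :: "complex mat"
  assumes X: "X \<in> carrier_mat m m"
    and ex: "\<exists>Y \<in> carrier_mat m m. X + Y \<in> unitary_mat m \<and> X - Y \<in> unitary_mat m"
  shows
   "(\<exists>U V (p::nat) (q::nat) (r::nat) (ms :: nat \<Rightarrow> nat) (s :: nat \<Rightarrow> real).
       U \<in> unitary_mat m \<and> V \<in> unitary_mat m \<and>
       (\<forall>j<r. ms j > 0) \<and> (\<forall>j<r. 0 < s j \<and> s j < 1) \<and>
       (\<forall>i j. i < j \<and> j < r \<longrightarrow> s j < s i) \<and>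
       p + q + (\<Sum>j<r. ms j) = m \<and>
       X = U * diag_block_mat ([1\<^sub>m p, 0\<^sub>m q q] @
              map (\<lambda>j. complex_of_real (s j) \<cdot>\<^sub>m 1\<^sub>m (ms j)) [0..<r]) * V)
    \<and>
    (\<forall>U V (p::nat) (q::nat) (r::nat) (ms :: nat \<Rightarrow> nat) (s :: nat \<Rightarrow> real).
       U \<in> unitary_mat m \<and> V \<in> unitary_mat m \<and>
       (\<forall>j<r. ms j > 0) \<and> (\<forall>j<r. 0 < s j \<and> s j < 1) \<and>
       (\<forall>i j. i < j \<and> j < r \<longrightarrow> s j < s i) \<and>
       p + q + (\<Sum>j<r. ms j) = m \<and>
       X = U * diag_block_mat ([1\<^sub>m p, 0\<^sub>m q q] @
              map (\<lambda>j. complex_of_real (s j) \<cdot>\<^sub>m 1\<^sub>m (ms j)) [0..<r]) * V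
     \<longrightarrow> (\<forall>Y \<in> carrier_mat m m. X + Y \<in> unitary_mat m \<and> X - Y \<in> unitary_mat m \<longrightarrow>
          (\<exists>W (H :: nat \<Rightarrow> complex mat).
             W \<in> unitary_mat q \<and>
             (\<forall>j<r. H j \<in> hermitian_mat (ms j) \<inter> unitary_mat (ms j)) \<and>
             Y = U * diag_block_mat ([0\<^sub>m p p, W] @
                   map (\<lambda>j. (\<i> * complex_of_real (sqrt (1 - (s j)\<^sup>2))) \<cdot>\<^sub>m H j) [0..<r]) * V)))"
proof -
  obtain Y where "Y \<in> carrier_mat m m" "X + Y \<in> unitary_mat m" "X - Y \<in> unitary_mat m"
    using ex by blast
  from canonical_form_exists[OF X this] show ?thesis
    using canonical_form_partner[of _ m _ _ _ _ _ _ X] by blast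
qed

end
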